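(* Let $N\ge 6$ and $$H=\sum_{i=1}^N\big(J_XX_iX_{i+1}+J_YY_iY_{i+1}+h_XX_i+h_YY_i+h_ZZ_i\big)$$ on a ring of $N$ sites with periodic boundary conditions, with real parameters $J_X\neq0$, $J_Y\neq0$ and $(h_X,h_Y)\neq(0,0)$. Let $Q$ be any operator that is a linear combination of Pauli strings of support at most $2$ and satisfies $[Q,H]=0$. Then: (a) If $N$ is even, $h_Z=0$, $h_X\neq 0$, $h_Y\neq0$ and $J_Y=-J_X\,(h_Y/h_X)^2$, then $Q$ lies in the linear span of $I$, $H$ and $$Q_0=\sum_{i=1}^N(-1)^i\,(h_XX_i+h_YY_i)(h_XX_{i+1}+h_YY_{i+1}),$$ and $Q_0$ indeed commutes with $H$. (b) Otherwise, $Q$ lies in the linear span of $I$ and $H$. In particular, in all cases $H$ has no conserved quantity that is a linear combination of Pauli strings of support at most $1$ other than multiples of $I$.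
   Context: $X_i,Y_i,Z_i$ denote the Pauli matrices on site $i$, $I$ is the identity; site $N+1$ is identified with site $1$. A Pauli string is a tensor product over sites of operators from $\{I,X,Y,Z\}$; its support is the length of the shortest run of consecutive sites (on the ring) containing all its non-identity factors (the identity string has support $0$). *)

theory Defs
  imports Complex_Main
begin

text \<open>Operators on the N-site spin-1/2 chain are represented as (2^N x 2^N) complex
matrices given by their entry functions nat => nat => complex; the computational basis
state with index a < 2^N has the spin of site i (0-based, i < N) given by bit i of a.
Entries with an index >= 2^N are always 0.  Sites are numbered 0..N-1 (paper: 1..N);
site N is identified with site 0.\<close>

type_synonym op = "nat \<Rightarrow> nat \<Rightarrow> complex"

datatype pauli = PI | PX | PY | PZ

definition bit_of :: "nat \<Rightarrow> nat \<Rightarrow> bool" where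
  "bit_of a i = odd (a div 2 ^ i)"

text \<open>Single-site matrix entries (row r, column c); False = basis state 0, True = 1.\<close>
fun pmat :: "pauli \<Rightarrow> bool \<Rightarrow> bool \<Rightarrow> complex" where
  "pmat PI r c = (if r = c then 1 else 0)"
| "pmat PX r c = (if r \<noteq> c then 1 else 0)"
| "pmat PY r c = (if r = c then 0 else if c then - \<i> else \<i>)"
| "pmat PZ r c = (if r \<noteq> c then 0 else if r then -1 else 1)"

definition pstring :: "nat \<Rightarrow> (nat \<Rightarrow> pauli) \<Rightarrow> op" where
  "pstring N s a b =
     (if a < 2 ^ N \<and> b < 2 ^ N
      then (\<Prod>i<N. pmat (s i) (bit_of a i) (bit_of b i)) else 0)"

definition idop :: "nat \<Rightarrow> op" where
  "idop N = pstring N (\<lambda>_. PI)"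

definition site1 :: "nat \<Rightarrow> nat \<Rightarrow> pauli \<Rightarrow> op" where
  "site1 N i P = pstring N ((\<lambda>_. PI)(i := P))"

definition site2 :: "nat \<Rightarrow> nat \<Rightarrow> pauli \<Rightarrow> pauli \<Rightarrow> op" where
  "site2 N i P P' = pstring N ((\<lambda>_. PI)(i := P, (Suc i) mod N := P'))"

definition mmul :: "nat \<Rightarrow> op \<Rightarrow> op \<Rightarrow> op" where
  "mmul N A B = (\<lambda>a b. \<Sum>k<2 ^ N. A a k * B k b)"

definition commutes :: "nat \<Rightarrow> op \<Rightarrow> op \<Rightarrow> bool" where
  "commutes N A B \<longleftrightarrow> mmul N A B = mmul N B A"

text \<open>The run of length k starting at j
consists of the sites i with (i - j) mod N < k.\<close>
definition support :: "nat \<Rightarrow> (nat \<Rightarrow> pauli) \<Rightarrow> nat" where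
  "support N s =
     (if \<forall>i<N. s i = PI then 0
      else (LEAST k. \<exists>j<N. \<forall>i<N. s i \<noteq> PI \<longrightarrow> (i + N - j) mod N < k))"

definition local_op :: "nat \<Rightarrow> nat \<Rightarrow> op \<Rightarrow> bool" where
  "local_op k N Q \<longleftrightarrow>
     (\<exists>S c. finite S \<and> (\<forall>s\<in>S. (\<forall>i\<ge>N. s i = PI) \<and> support N s \<le> k) \<and>
            Q = (\<lambda>a b. \<Sum>s\<in>S. c s * pstring N s a b))"

definition ham :: "nat \<Rightarrow> real \<Rightarrow> real \<Rightarrow> real \<Rightarrow> real \<Rightarrow> real \<Rightarrow> op" where
  "ham N JX JY hX hY hZ = (\<lambda>a b. \<Sum>i<N.
       of_real JX * site2 N i PX PX a b + of_real JY * site2 N i PY PY a b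
     + of_real hX * site1 N i PX a b + of_real hY * site1 N i PY a b
     + of_real hZ * site1 N i PZ a b)"

text \<open>Q0 = sum_i (-1)^i (hX X_i + hY Y_i)(hX X_{i+1} + hY Y_{i+1}) with paper sites 1..N;
0-based site i corresponds to paper site i+1, hence the sign (-1)^(i+1).\<close>
definition Q0 :: "nat \<Rightarrow> real \<Rightarrow> real \<Rightarrow> op" where
  "Q0 N hX hY = (\<lambda>a b. \<Sum>i<N. (-1) ^ (i + 1) *
       mmul N (\<lambda>a b. of_real hX * site1 N i PX a b + of_real hY * site1 N i PY a b)
              (\<lambda>a b. of_real hX * site1 N ((Suc i) mod N) PX a b
                   + of_real hY * site1 N ((Suc i) mod N) PY a b) a b)"

end

theory Submission
  imports Defs
begin

text \<open>Pauli strings form an orthogonal basis, so an operator is determined by its Pauli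
coefficients and [Q, H] = 0 can be read coefficient by coefficient. For a Q of support at most 2,
the coefficient of a string on three consecutive sites j, j+1, j+2 receives contributions from only
four bonds of H; these window equations form a linear system for the bond and field coefficients of
Q. When JX, JY \<noteq> 0 and (hX, hY) \<noteq> 0 the system forces the coefficients of Q to be
beta times those of H plus an XX coefficient alternating with period two along the ring, and the
alternating part is consistent only if N is even, hZ = 0 and JX hY^2 + JY hX^2 = 0; it is then the
coefficient pattern of Q0. The converse, [Q0, H] = 0, is checked the same way: [Q0, H] can only have
coefficients on three-site windows, and there the alternating signs make them cancel.\<close>

section \<open>Products of Pauli strings\<close>

fun pauli_mult :: "pauli \<Rightarrow> pauli \<Rightarrow> pauli" where
  "pauli_mult PI b = b"
| "pauli_mult PX PI = PX" | "pauli_mult PX PX = PI" | "pauli_mult PX PY = PZ" | "pauli_mult PX PZ = PY"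
| "pauli_mult PY PI = PY" | "pauli_mult PY PX = PZ" | "pauli_mult PY PY = PI" | "pauli_mult PY PZ = PX"
| "pauli_mult PZ PI = PZ" | "pauli_mult PZ PX = PY" | "pauli_mult PZ PY = PX" | "pauli_mult PZ PZ = PI"

fun pauli_phase :: "pauli \<Rightarrow> pauli \<Rightarrow> complex" where
  "pauli_phase PX PY = \<i>" | "pauli_phase PY PX = - \<i>"
| "pauli_phase PY PZ = \<i>" | "pauli_phase PZ PY = - \<i>"
| "pauli_phase PZ PX = \<i>" | "pauli_phase PX PZ = - \<i>"
| "pauli_phase _ _ = 1"

lemma pmat_mult:
  "pmat a r False * pmat b False c + pmat a r True * pmat b True c
     = pauli_phase a b * pmat (pauli_mult a b) r c"
  by (cases a; cases b; cases r; cases c; simp)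

lemma pauli_mult_PI_right [simp]: "pauli_mult a PI = a" by (cases a) auto
lemma pauli_phase_PI_left [simp]: "pauli_phase PI a = 1" by (cases a) auto
lemma pauli_phase_PI_right [simp]: "pauli_phase a PI = 1" by (cases a) auto
lemma pauli_mult_self [simp]: "pauli_mult a a = PI" by (cases a) auto
lemma pauli_phase_self [simp]: "pauli_phase a a = 1" by (cases a) auto
lemma pauli_mult_commute: "pauli_mult a b = pauli_mult b a" by (cases a; cases b) auto
lemma pauli_mult_eq_PI_iff: "pauli_mult a b = PI \<longleftrightarrow> a = b" by (cases a; cases b) auto

lemma pauli_phase_asym_imp:
  "pauli_phase a b \<noteq> pauli_phase b a \<Longrightarrow> a \<noteq> PI \<and> b \<noteq> PI \<and> a \<noteq> b"
  by (cases a; cases b) auto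

definition string_mult :: "(nat \<Rightarrow> pauli) \<Rightarrow> (nat \<Rightarrow> pauli) \<Rightarrow> nat \<Rightarrow> pauli" where
  "string_mult s t = (\<lambda>i. pauli_mult (s i) (t i))"

definition string_phase :: "nat \<Rightarrow> (nat \<Rightarrow> pauli) \<Rightarrow> (nat \<Rightarrow> pauli) \<Rightarrow> complex" where
  "string_phase N s t = (\<Prod>i<N. pauli_phase (s i) (t i))"

lemma string_mult_commute: "string_mult s t = string_mult t s"
  by (simp add: string_mult_def pauli_mult_commute)

lemma string_phase_disjoint:
  assumes "\<forall>k<N. t k = PI \<or> u k = PI"
  shows "string_phase N t u = 1" "string_phase N u t = 1"
  unfolding string_phase_def using assms by (auto intro!: prod.neutral)

lemma string_phase_cong:
  "\<forall>r<N. u r = u' r \<Longrightarrow> string_phase N t u = string_phase N t u' \<and> string_phase N u t = string_phase N u' t"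
  unfolding string_phase_def by (auto intro!: prod.cong)

lemma bit_of_less_power: "k < 2 ^ N \<Longrightarrow> bit_of k N = False"
  by (simp add: bit_of_def)

lemma bit_of_add_power_low: "i < N \<Longrightarrow> bit_of (k + 2 ^ N) i = bit_of k i"
proof -
  assume "i < N"
  then have "(2::nat) ^ N = 2 ^ i * 2 ^ (N - i)" by (simp add: power_add[symmetric])
  then have "(k + 2 ^ N) div 2 ^ i = k div 2 ^ i + 2 ^ (N - i)" by simp
  moreover have "even ((2::nat) ^ (N - i))" using \<open>i < N\<close> by simp
  ultimately show ?thesis by (simp add: bit_of_def)
qed

lemma bit_of_add_power_top: "k < 2 ^ N \<Longrightarrow> bit_of (k + 2 ^ N) N = True"
proof -
  assume "k < 2 ^ N"
  then have "(k + 2 ^ N) div 2 ^ N = 1" by (simp add: div_add_self2)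
  then show ?thesis by (simp add: bit_of_def)
qed

lemma sum_basis_prod_bits:
  fixes f :: "nat \<Rightarrow> bool \<Rightarrow> complex"
  shows "(\<Sum>k<2 ^ N. \<Prod>i<N. f i (bit_of k i)) = (\<Prod>i<N. f i False + f i True)"
proof (induction N)
  case 0
  then show ?case by simp
next
  case (Suc N)
  have split: "(\<Sum>k<2 ^ Suc N. g k) = (\<Sum>k<2 ^ N. g k) + (\<Sum>k<2 ^ N. g (k + 2 ^ N))"
    for g :: "nat \<Rightarrow> complex"
  proof -
    have "(\<Sum>k<2 ^ Suc N. g k) = (\<Sum>k\<in>{0..<2 ^ N}. g k) + (\<Sum>k\<in>{2 ^ N..<2 ^ N + 2 ^ N}. g k)"
      by (simp add: sum.atLeastLessThan_concat lessThan_atLeast0 mult_2)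
    also have "(\<Sum>k\<in>{2 ^ N..<2 ^ N + 2 ^ N}. g k) = (\<Sum>k<2 ^ N. g (k + 2 ^ N))"
      using sum.shift_bounds_nat_ivl[of g 0 "2 ^ N" "2 ^ N"] by (simp add: lessThan_atLeast0)
    finally show ?thesis by (simp add: lessThan_atLeast0)
  qed
  have low: "(\<Sum>k<2 ^ N. \<Prod>i<Suc N. f i (bit_of k i))
      = (\<Sum>k<2 ^ N. \<Prod>i<N. f i (bit_of k i)) * f N False"
    by (simp add: bit_of_less_power sum_distrib_right)
  have high: "(\<Sum>k<2 ^ N. \<Prod>i<Suc N. f i (bit_of (k + 2 ^ N) i))
      = (\<Sum>k<2 ^ N. \<Prod>i<N. f i (bit_of k i)) * f N True"
    by (simp add: bit_of_add_power_low bit_of_add_power_top sum_distrib_right)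
  show ?case
    by (simp only: split low high Suc.IH) (simp add: algebra_simps)
qed

lemma mmul_pstring:
  "mmul N (pstring N s) (pstring N t) = (\<lambda>a b. string_phase N s t * pstring N (string_mult s t) a b)"
proof (intro ext)
  fix a b
  show "mmul N (pstring N s) (pstring N t) a b = string_phase N s t * pstring N (string_mult s t) a b"
  proof (cases "a < 2 ^ N \<and> b < 2 ^ N")
    case True
    have "mmul N (pstring N s) (pstring N t) a b =
      (\<Sum>k<2 ^ N. \<Prod>i<N. pmat (s i) (bit_of a i) (bit_of k i) * pmat (t i) (bit_of k i) (bit_of b i))"
      using True by (simp add: mmul_def pstring_def prod.distrib)
    also have "\<dots> = (\<Prod>i<N. pmat (s i) (bit_of a i) False * pmat (t i) False (bit_of b i)
                         + pmat (s i) (bit_of a i) True * pmat (t i) True (bit_of b i))"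
      by (rule sum_basis_prod_bits)
    also have "\<dots> = (\<Prod>i<N. pauli_phase (s i) (t i) * pmat (pauli_mult (s i) (t i)) (bit_of a i) (bit_of b i))"
      by (simp add: pmat_mult)
    also have "\<dots> = string_phase N s t * pstring N (string_mult s t) a b"
      using True by (simp add: prod.distrib string_phase_def pstring_def string_mult_def)
    finally show ?thesis .
  next
    case False
    then show ?thesis by (auto simp add: mmul_def pstring_def)
  qed
qed

lemma pstring_cong: "\<forall>r<N. z r = z' r \<Longrightarrow> pstring N z = pstring N z'"
  unfolding pstring_def by (intro ext) (auto intro!: prod.cong)

lemma trace_pstring: "(\<Sum>a<2 ^ N. pstring N w a a) = (\<Prod>i<N. if w i = PI then 2 else 0)"
proof -
  have "(\<Sum>a<2 ^ N. pstring N w a a) = (\<Sum>a<2 ^ N. \<Prod>i<N. pmat (w i) (bit_of a i) (bit_of a i))"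
    by (simp add: pstring_def)
  also have "\<dots> = (\<Prod>i<N. pmat (w i) False False + pmat (w i) True True)"
    by (rule sum_basis_prod_bits)
  also have "\<dots> = (\<Prod>i<N. if w i = PI then 2 else 0)"
  proof (rule prod.cong)
    show "pmat (w i) False False + pmat (w i) True True = (if w i = PI then 2 else 0)" for i
      by (cases "w i") auto
  qed simp
  finally show ?thesis .
qed

lemma mmul_add_right: "mmul N M (\<lambda>a b. A a b + B a b) = (\<lambda>a b. mmul N M A a b + mmul N M B a b)"
  by (simp add: mmul_def distrib_left sum.distrib)

lemma mmul_add_left: "mmul N (\<lambda>a b. A a b + B a b) M = (\<lambda>a b. mmul N A M a b + mmul N B M a b)"
  by (simp add: mmul_def distrib_right sum.distrib)

lemma mmul_cmult_right: "mmul N M (\<lambda>a b. c * A a b) = (\<lambda>a b. c * mmul N M A a b)"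
  by (simp add: mmul_def sum_distrib_left mult_ac)

lemma mmul_cmult_left: "mmul N (\<lambda>a b. c * A a b) M = (\<lambda>a b. c * mmul N A M a b)"
  by (simp add: mmul_def sum_distrib_left mult_ac)

lemma mmul_sum_right: "mmul N M (\<lambda>a b. \<Sum>x\<in>X. F x a b) = (\<lambda>a b. \<Sum>x\<in>X. mmul N M (F x) a b)"
  unfolding mmul_def by (simp add: sum_distrib_left sum.swap[of _ "{..<2 ^ N}"])

lemma mmul_sum_left: "mmul N (\<lambda>a b. \<Sum>x\<in>X. F x a b) M = (\<lambda>a b. \<Sum>x\<in>X. mmul N (F x) M a b)"
  unfolding mmul_def by (simp add: sum_distrib_right sum.swap[of _ "{..<2 ^ N}"])

section \<open>Pauli coefficients and the span of Pauli strings\<close>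

text \<open>The coefficient of the Pauli string u in M; Pauli strings are orthogonal for the trace form.\<close>

definition pcoef :: "nat \<Rightarrow> (nat \<Rightarrow> pauli) \<Rightarrow> op \<Rightarrow> complex" where
  "pcoef N u M = (\<Sum>a<2 ^ N. \<Sum>b<2 ^ N. pstring N u b a * M a b) / 2 ^ N"

lemma pcoef_pstring: "pcoef N u (pstring N s) = (if \<forall>i<N. u i = s i then 1 else 0)"
proof -
  have "(\<Sum>a<2 ^ N. \<Sum>b<2 ^ N. pstring N u b a * pstring N s a b)
      = (\<Sum>b<2 ^ N. mmul N (pstring N u) (pstring N s) b b)"
    by (subst sum.swap) (simp add: mmul_def)
  also have "\<dots> = string_phase N u s * (\<Prod>i<N. if string_mult u s i = PI then 2 else 0)"
    by (simp add: mmul_pstring sum_distrib_left[symmetric] trace_pstring)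
  finally have trace: "(\<Sum>a<2 ^ N. \<Sum>b<2 ^ N. pstring N u b a * pstring N s a b)
      = string_phase N u s * (\<Prod>i<N. if string_mult u s i = PI then 2 else 0)" .
  show ?thesis
  proof (cases "\<forall>i<N. u i = s i")
    case True
    then have "string_phase N u s = 1" by (simp add: string_phase_def)
    moreover have "(\<Prod>i<N. if string_mult u s i = PI then 2 else 0) = (\<Prod>i<N. (2::complex))"
      using True by (intro prod.cong) (auto simp: string_mult_def)
    ultimately show ?thesis using True trace by (simp add: pcoef_def)
  next
    case False
    then obtain i where "i < N" "u i \<noteq> s i" by auto
    then have "(\<Prod>i<N. if string_mult u s i = PI then 2 else (0::complex)) = 0"
      by (intro prod_zero) (auto simp: string_mult_def pauli_mult_eq_PI_iff intro!: bexI[of _ i])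
    with False trace show ?thesis by (simp add: pcoef_def)
  qed
qed

lemma pcoef_mmul_right:
  "pcoef N u (mmul N M (pstring N t)) = string_phase N t u * pcoef N (string_mult u t) M"
proof -
  have "(\<Sum>a<2 ^ N. \<Sum>b<2 ^ N. pstring N u b a * mmul N M (pstring N t) a b)
      = (\<Sum>a<2 ^ N. \<Sum>b<2 ^ N. \<Sum>k<2 ^ N. M a k * (pstring N t k b * pstring N u b a))"
    by (simp add: mmul_def sum_distrib_left mult_ac)
  also have "\<dots> = (\<Sum>a<2 ^ N. \<Sum>k<2 ^ N. \<Sum>b<2 ^ N. M a k * (pstring N t k b * pstring N u b a))"
    by (rule sum.cong[OF refl], rule sum.swap)
  also have "\<dots> = (\<Sum>a<2 ^ N. \<Sum>k<2 ^ N. M a k * mmul N (pstring N t) (pstring N u) k a)"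
    by (simp add: mmul_def sum_distrib_left)
  also have "\<dots> = string_phase N t u * (\<Sum>a<2 ^ N. \<Sum>k<2 ^ N. pstring N (string_mult u t) k a * M a k)"
    by (simp add: mmul_pstring sum_distrib_left string_mult_commute mult_ac)
  finally show ?thesis by (simp add: pcoef_def)
qed

lemma pcoef_mmul_left:
  "pcoef N u (mmul N (pstring N t) M) = string_phase N u t * pcoef N (string_mult u t) M"
proof -
  have "(\<Sum>a<2 ^ N. \<Sum>b<2 ^ N. pstring N u b a * mmul N (pstring N t) M a b)
      = (\<Sum>a<2 ^ N. \<Sum>b<2 ^ N. \<Sum>k<2 ^ N. M k b * (pstring N u b a * pstring N t a k))"
    by (simp add: mmul_def sum_distrib_left mult_ac)
  also have "\<dots> = (\<Sum>b<2 ^ N. \<Sum>a<2 ^ N. \<Sum>k<2 ^ N. M k b * (pstring N u b a * pstring N t a k))"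
    by (rule sum.swap)
  also have "\<dots> = (\<Sum>b<2 ^ N. \<Sum>k<2 ^ N. \<Sum>a<2 ^ N. M k b * (pstring N u b a * pstring N t a k))"
    by (rule sum.cong[OF refl], rule sum.swap)
  also have "\<dots> = (\<Sum>b<2 ^ N. \<Sum>k<2 ^ N. M k b * mmul N (pstring N u) (pstring N t) b k)"
    by (simp add: mmul_def sum_distrib_left)
  also have "\<dots> = string_phase N u t * (\<Sum>b<2 ^ N. \<Sum>k<2 ^ N. pstring N (string_mult u t) b k * M k b)"
    by (simp add: mmul_pstring sum_distrib_left mult_ac)
  also have "\<dots> = string_phase N u t * (\<Sum>k<2 ^ N. \<Sum>b<2 ^ N. pstring N (string_mult u t) b k * M k b)"
    by (subst sum.swap) (rule refl)
  finally show ?thesis by (simp add: pcoef_def)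
qed

lemma pcoef_add: "pcoef N u (\<lambda>a b. A a b + B a b) = pcoef N u A + pcoef N u B"
  by (simp add: pcoef_def distrib_left sum.distrib add_divide_distrib)

lemma pcoef_diff: "pcoef N u (\<lambda>a b. A a b - B a b) = pcoef N u A - pcoef N u B"
  by (simp add: pcoef_def right_diff_distrib sum_subtractf diff_divide_distrib)

lemma pcoef_cmult: "pcoef N u (\<lambda>a b. c * A a b) = c * pcoef N u A"
  by (simp add: pcoef_def sum_distrib_left mult_ac)

lemma pcoef_sum: "pcoef N u (\<lambda>a b. \<Sum>x\<in>X. F x a b) = (\<Sum>x\<in>X. pcoef N u (F x))"
proof -
  have "(\<Sum>a<2 ^ N. \<Sum>b<2 ^ N. pstring N u b a * (\<Sum>x\<in>X. F x a b))
     = (\<Sum>a<2 ^ N. \<Sum>x\<in>X. \<Sum>b<2 ^ N. pstring N u b a * F x a b)"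
    by (simp add: sum_distrib_left sum.swap[of _ "{..<2 ^ N}" X])
  also have "\<dots> = (\<Sum>x\<in>X. \<Sum>a<2 ^ N. \<Sum>b<2 ^ N. pstring N u b a * F x a b)"
    by (rule sum.swap)
  finally show ?thesis by (simp add: pcoef_def sum_divide_distrib)
qed

lemma pcoef_lincomb:
  "pcoef N w (\<lambda>a b. \<Sum>s\<in>S. c s * pstring N s a b) = (\<Sum>s\<in>S. c s * (if \<forall>i<N. w i = s i then 1 else 0))"
  by (simp add: pcoef_sum pcoef_cmult pcoef_pstring)

lemma pcoef_lincomb_nonzero:
  assumes "pcoef N w (\<lambda>a b. \<Sum>s\<in>S. c s * pstring N s a b) \<noteq> 0"
  shows "\<exists>s\<in>S. \<forall>i<N. w i = s i"
proof (rule ccontr)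
  assume "\<not> ?thesis"
  then have "(\<Sum>s\<in>S. c s * (if \<forall>i<N. w i = s i then 1 else 0)) = 0"
    by (intro sum.neutral) auto
  then show False using assms by (simp add: pcoef_lincomb)
qed

lemma pcoef_idop: "pcoef N w (idop N) = (if \<forall>k<N. w k = PI then 1 else 0)"
  by (simp add: idop_def pcoef_pstring)

definition ring_string :: "nat \<Rightarrow> (nat \<Rightarrow> pauli) \<Rightarrow> bool" where
  "ring_string N w \<longleftrightarrow> (\<forall>i\<ge>N. w i = PI)"

definition pauli_span :: "nat \<Rightarrow> op \<Rightarrow> bool" where
  "pauli_span N M \<longleftrightarrow> (\<exists>T d. finite T \<and> (\<forall>s\<in>T. ring_string N s)
                                \<and> M = (\<lambda>a b. \<Sum>s\<in>T. d s * pstring N s a b))"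

lemma ring_string_eq_iff:
  assumes "ring_string N u" "ring_string N s"
  shows "(\<forall>i<N. u i = s i) \<longleftrightarrow> u = s"
proof
  assume "\<forall>i<N. u i = s i"
  then show "u = s" using assms unfolding ring_string_def by (metis ext not_le)
qed simp

lemma ring_string_mult: "ring_string N s \<Longrightarrow> ring_string N t \<Longrightarrow> ring_string N (string_mult s t)"
  by (simp add: ring_string_def string_mult_def)

lemma pauli_span_image:
  fixes g :: "'x \<Rightarrow> nat \<Rightarrow> pauli"
  assumes "finite X" "\<forall>x\<in>X. ring_string N (g x)"
  shows "pauli_span N (\<lambda>a b. \<Sum>x\<in>X. d x * pstring N (g x) a b)"
proof -
  define d' where "d' = (\<lambda>w. \<Sum>x\<in>{x\<in>X. g x = w}. d x)"
  have "(\<Sum>x\<in>X. d x * pstring N (g x) a b) = (\<Sum>w\<in>g ` X. d' w * pstring N w a b)" for a b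
  proof -
    have "(\<Sum>x\<in>X. d x * pstring N (g x) a b)
        = (\<Sum>w\<in>g ` X. \<Sum>x\<in>{x\<in>X. g x = w}. d x * pstring N (g x) a b)"
      by (rule sum.image_gen[OF assms(1)])
    also have "\<dots> = (\<Sum>w\<in>g ` X. d' w * pstring N w a b)"
      unfolding d'_def sum_distrib_right by (intro sum.cong refl) auto
    finally show ?thesis .
  qed
  then show ?thesis
    unfolding pauli_span_def using assms by (intro exI[of _ "g ` X"] exI[of _ d']) auto
qed

lemma pauli_span_pstring: "ring_string N s \<Longrightarrow> pauli_span N (pstring N s)"
  unfolding pauli_span_def by (intro exI[of _ "{s}"] exI[of _ "\<lambda>_. 1"]) auto

lemma pauli_span_add:
  assumes "pauli_span N A" "pauli_span N B"
  shows "pauli_span N (\<lambda>a b. A a b + B a b)"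
proof -
  obtain T1 d1 where 1: "finite T1" "\<forall>s\<in>T1. ring_string N s"
    "A = (\<lambda>a b. \<Sum>s\<in>T1. d1 s * pstring N s a b)"
    using assms(1) unfolding pauli_span_def by blast
  obtain T2 d2 where 2: "finite T2" "\<forall>s\<in>T2. ring_string N s"
    "B = (\<lambda>a b. \<Sum>s\<in>T2. d2 s * pstring N s a b)"
    using assms(2) unfolding pauli_span_def by blast
  have "(\<lambda>a b. A a b + B a b)
      = (\<lambda>a b. \<Sum>x\<in>T1 <+> T2. case_sum d1 d2 x * pstring N (case_sum id id x) a b)"
    unfolding 1(3) 2(3) using 1(1) 2(1) by (simp add: sum.Plus)
  moreover have "pauli_span N (\<lambda>a b. \<Sum>x\<in>T1 <+> T2. case_sum d1 d2 x * pstring N (case_sum id id x) a b)"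
    using 1(1,2) 2(1,2) by (intro pauli_span_image) auto
  ultimately show ?thesis by simp
qed

lemma pauli_span_cmult: "pauli_span N A \<Longrightarrow> pauli_span N (\<lambda>a b. c * A a b)"
  unfolding pauli_span_def
  by (elim exE conjE, rule_tac x = T in exI, rule_tac x = "\<lambda>s. c * d s" in exI)
    (simp add: sum_distrib_left mult_ac)

lemma pauli_span_diff:
  "pauli_span N A \<Longrightarrow> pauli_span N B \<Longrightarrow> pauli_span N (\<lambda>a b. A a b - B a b)"
  using pauli_span_add[of N A "\<lambda>a b. (-1) * B a b"] pauli_span_cmult by fastforce

lemma pauli_span_sum:
  "finite I \<Longrightarrow> \<forall>i\<in>I. pauli_span N (F i) \<Longrightarrow> pauli_span N (\<lambda>a b. \<Sum>i\<in>I. F i a b)"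
proof (induction I rule: finite_induct)
  case empty
  then show ?case unfolding pauli_span_def by (intro exI[of _ "{}"]) auto
next
  case (insert x I)
  then show ?case using pauli_span_add[of N "F x" "\<lambda>a b. \<Sum>i\<in>I. F i a b"] by simp
qed

lemma pauli_span_mmul:
  assumes "pauli_span N A" "pauli_span N B"
  shows "pauli_span N (mmul N A B)"
proof -
  obtain T1 d1 where 1: "finite T1" "\<forall>s\<in>T1. ring_string N s"
    "A = (\<lambda>a b. \<Sum>s\<in>T1. d1 s * pstring N s a b)"
    using assms(1) unfolding pauli_span_def by blast
  obtain T2 d2 where 2: "finite T2" "\<forall>s\<in>T2. ring_string N s"
    "B = (\<lambda>a b. \<Sum>s\<in>T2. d2 s * pstring N s a b)"
    using assms(2) unfolding pauli_span_def by blast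
  have "mmul N A B = (\<lambda>a b. \<Sum>(s, t)\<in>T1 \<times> T2.
          (d1 s * d2 t * string_phase N s t) * pstring N (string_mult s t) a b)"
    unfolding 1(3) 2(3)
    by (simp add: mmul_sum_left mmul_sum_right mmul_cmult_left mmul_cmult_right mmul_pstring
        sum_distrib_left mult_ac sum.cartesian_product)
  moreover have "pauli_span N (\<lambda>a b. \<Sum>(s, t)\<in>T1 \<times> T2.
          (d1 s * d2 t * string_phase N s t) * pstring N (string_mult s t) a b)"
    using 1(1,2) 2(1,2) ring_string_mult
    by (simp only: split_def, intro pauli_span_image) auto
  ultimately show ?thesis by simp
qed

lemma pauli_span_eq_zero:
  assumes "pauli_span N M" "\<And>w. ring_string N w \<Longrightarrow> pcoef N w M = 0"
  shows "M = (\<lambda>a b. 0)"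
proof -
  obtain T d where T: "finite T" "\<forall>s\<in>T. ring_string N s" "M = (\<lambda>a b. \<Sum>s\<in>T. d s * pstring N s a b)"
    using assms(1) unfolding pauli_span_def by blast
  have "d u = 0" if u: "u \<in> T" for u
  proof -
    have "pcoef N u M = (\<Sum>s\<in>T. d s * (if \<forall>i<N. u i = s i then 1 else 0))"
      unfolding T(3) by (rule pcoef_lincomb)
    also have "\<dots> = (\<Sum>s\<in>T. if s = u then d s else 0)"
      using T(2) u ring_string_eq_iff[of N u] by (intro sum.cong refl) auto
    also have "\<dots> = d u" using T(1) u by simp
    finally show ?thesis using assms(2) T(2) u by simp
  qed
  then show ?thesis unfolding T(3) by simp
qed

lemma local_op_pauli_span: "local_op k N Q \<Longrightarrow> pauli_span N Q"
  unfolding local_op_def pauli_span_def ring_string_def by blast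

lemma pauli_span_idop: "pauli_span N (idop N)"
  unfolding idop_def by (intro pauli_span_pstring) (simp add: ring_string_def)

definition onsite :: "nat \<Rightarrow> pauli \<Rightarrow> nat \<Rightarrow> pauli" where
  "onsite i P = (\<lambda>_. PI)(i := P)"

definition bond :: "nat \<Rightarrow> nat \<Rightarrow> pauli \<Rightarrow> pauli \<Rightarrow> nat \<Rightarrow> pauli" where
  "bond N i P P' = (\<lambda>_. PI)(i := P, Suc i mod N := P')"

lemma site1_eq_onsite: "site1 N i P = pstring N (onsite i P)"
  by (simp add: site1_def onsite_def)

lemma site2_eq_bond: "site2 N i P P' = pstring N (bond N i P P')"
  by (simp add: site2_def bond_def)

lemma add_mod_cancel_left_less:
  fixes p i j N :: nat
  assumes "(p + i) mod N = (p + j) mod N" "i < N" "j < N"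
  shows "i = j"
proof (rule ccontr)
  have False if "a < b" "b < N" "(p + a) mod N = (p + b) mod N" for a b :: nat
  proof -
    have "N dvd (p + b) - (p + a)" using mod_eq_dvd_iff_nat[of "p + a" "p + b" N] that by simp
    then have "N dvd b - a" by simp
    then have "N \<le> b - a" using that by (intro dvd_imp_le) auto
    then show False using that by simp
  qed
  moreover assume "i \<noteq> j"
  ultimately show False using assms by (metis linorder_neqE_nat)
qed

lemma Suc_mod_inj: "a < N \<Longrightarrow> b < N \<Longrightarrow> Suc a mod N = Suc b mod N \<Longrightarrow> a = b"
  using add_mod_cancel_left_less[of 1 a N b] by simp

lemma Suc_mod_neq:
  assumes "1 < N"
  shows "Suc i mod N \<noteq> i"
proof
  assume h: "Suc i mod N = i"
  then have "i < N" using assms by (metis mod_less_divisor order.strict_trans zero_less_one)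
  with h assms show False by (cases "Suc i = N") auto
qed

lemma Suc_mod_surj: "j < N \<Longrightarrow> \<exists>p<N. Suc p mod N = j"
proof (cases j)
  case 0
  then show "j < N \<Longrightarrow> ?thesis" by (intro exI[of _ "N - 1"]) auto
next
  case (Suc k)
  then show "j < N \<Longrightarrow> ?thesis" by (intro exI[of _ k]) auto
qed

lemma alternating_sign_Suc_mod:
  assumes "even N" "i < N"
  shows "(-1::'a::ring_1) ^ (Suc i mod N + 1) = - ((-1) ^ (i + 1))"
proof (cases "Suc i < N")
  case False
  then have "Suc i = N" using assms by simp
  then show ?thesis using assms by (simp add: power_add)
qed simp

lemma bond_PI_right [simp]: "1 < N \<Longrightarrow> bond N i a PI = onsite i a"
  using Suc_mod_neq[of N i] by (auto simp: bond_def onsite_def fun_eq_iff)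

lemma bond_PI_left [simp]: "bond N i PI b = onsite (Suc i mod N) b"
  by (auto simp: bond_def onsite_def fun_eq_iff)

lemma onsite_eq_onsite_iff:
  assumes "i < N" "j < N" "A \<noteq> PI" "C \<noteq> PI"
  shows "(\<forall>k<N. onsite i A k = onsite j C k) \<longleftrightarrow> (i = j \<and> A = C)"
  using assms by (auto simp: onsite_def)

lemma onsite_PI [simp]: "onsite i PI = (\<lambda>_. PI)"
  by (simp add: onsite_def fun_eq_iff)

lemma string_mult_onsite_onsite:
  "Suc i mod N \<noteq> i \<Longrightarrow> string_mult (onsite i A) (onsite (Suc i mod N) B) = bond N i A B"
  by (auto simp: fun_eq_iff string_mult_def onsite_def bond_def)

lemma string_phase_onsite_onsite: "i \<noteq> j \<Longrightarrow> string_phase N (onsite i A) (onsite j B) = 1"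
  unfolding string_phase_def by (rule prod.neutral) (auto simp: onsite_def)

lemma ring_string_bond: "1 < N \<Longrightarrow> i < N \<Longrightarrow> ring_string N (bond N i A B)"
proof -
  assume "1 < N" "i < N"
  then have "k \<noteq> i" "k \<noteq> Suc i mod N" if "N \<le> k" for k
    using that by (metis leD mod_less_divisor not_less_iff_gr_or_eq order.strict_trans zero_less_one)+
  then show ?thesis unfolding ring_string_def bond_def by simp
qed

lemma ring_string_onsite: "i < N \<Longrightarrow> ring_string N (onsite i A)"
  by (auto simp: ring_string_def onsite_def)

lemma bond_eq_bond_iff:
  assumes "2 < N" "i < N" "j < N" "A \<noteq> PI" "B \<noteq> PI" "C \<noteq> PI" "D \<noteq> PI"
  shows "(\<forall>k<N. bond N i A B k = bond N j C D k) \<longleftrightarrow> (i = j \<and> A = C \<and> B = D)"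
proof
  assume h: "\<forall>k<N. bond N i A B k = bond N j C D k"
  have ni: "Suc i mod N \<noteq> i" "Suc j mod N \<noteq> j" using Suc_mod_neq assms(1) by auto
  have nn: "Suc (Suc j mod N) mod N \<noteq> j"
  proof
    assume "Suc (Suc j mod N) mod N = j"
    then have "(j + 2) mod N = (j + 0) mod N" using assms by (simp add: mod_Suc_eq)
    then show False using add_mod_cancel_left_less[of j 2 N 0] assms by simp
  qed
  have si: "Suc i mod N < N" using assms by simp
  have hi: "bond N j C D i = A" using h assms(2) ni by (metis bond_def fun_upd_same fun_upd_other)
  then have "i = j \<or> i = Suc j mod N" using assms by (auto simp: bond_def split: if_splits)
  moreover have "i \<noteq> Suc j mod N"
  proof
    assume ij: "i = Suc j mod N"
    have "bond N j C D (Suc i mod N) = B" using h si ni by (auto simp: bond_def)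
    moreover have "Suc i mod N \<noteq> j" "Suc i mod N \<noteq> Suc j mod N" using ij nn ni by auto
    ultimately show False using assms by (simp add: bond_def)
  qed
  ultimately have "i = j" by simp
  then show "i = j \<and> A = C \<and> B = D" using hi h si ni by (auto simp: bond_def)
qed simp

lemma bond_neq_onsite:
  assumes "1 < N" "i < N" "A \<noteq> PI" "B \<noteq> PI"
  shows "\<not> (\<forall>k<N. bond N i A B k = onsite j C k)" "\<not> (\<forall>k<N. onsite j C k = bond N i A B k)"
proof -
  have ni: "Suc i mod N \<noteq> i" using Suc_mod_neq assms(1) by auto
  have si: "Suc i mod N < N" using assms by simp
  have "bond N i A B i \<noteq> PI" "bond N i A B (Suc i mod N) \<noteq> PI" using ni assms by (auto simp: bond_def)
  moreover have "onsite j C i = PI \<or> onsite j C (Suc i mod N) = PI" using ni by (auto simp: onsite_def)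
  ultimately show "\<not> (\<forall>k<N. bond N i A B k = onsite j C k)" "\<not> (\<forall>k<N. onsite j C k = bond N i A B k)"
    using assms(2) si by metis+
qed

lemma bond_neq_identity: "1 < N \<Longrightarrow> i < N \<Longrightarrow> A \<noteq> PI \<Longrightarrow> \<not> (\<forall>k<N. PI = bond N i A B k)"
  using Suc_mod_neq[of N i] by (metis bond_def fun_upd_other fun_upd_same)

lemma onsite_neq_identity: "j < N \<Longrightarrow> C \<noteq> PI \<Longrightarrow> \<not> (\<forall>k<N. PI = onsite j C k)"
  by (metis fun_upd_same onsite_def)

definition bond_supported :: "nat \<Rightarrow> (nat \<Rightarrow> pauli) \<Rightarrow> bool" where
  "bond_supported N w \<longleftrightarrow> (\<exists>j<N. \<forall>k<N. w k \<noteq> PI \<longrightarrow> k = j \<or> k = Suc j mod N)"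

lemma bond_supported_cong: "bond_supported N s \<Longrightarrow> \<forall>i<N. w i = s i \<Longrightarrow> bond_supported N w"
  unfolding bond_supported_def by metis

lemma bond_supported_bond: "j < N \<Longrightarrow> bond_supported N (bond N j A B)"
  unfolding bond_supported_def by (auto simp: bond_def)

lemma bond_supported_onsite: "j < N \<Longrightarrow> bond_supported N (onsite j A)"
  unfolding bond_supported_def by (auto simp: onsite_def)

lemma bond_supported_cases:
  assumes "ring_string N w" "bond_supported N w" "1 < N"
  obtains "w = (\<lambda>_. PI)"
    | i A where "i < N" "A \<noteq> PI" "w = onsite i A"
    | i A B where "i < N" "A \<noteq> PI" "B \<noteq> PI" "w = bond N i A B"
proof -
  obtain j where j: "j < N" "\<forall>k<N. w k \<noteq> PI \<longrightarrow> k = j \<or> k = Suc j mod N"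
    using assms(2) unfolding bond_supported_def by blast
  have ne: "Suc j mod N \<noteq> j" using Suc_mod_neq[OF assms(3)] .
  have sj: "Suc j mod N < N" using assms(3) by simp
  have w: "w = bond N j (w j) (w (Suc j mod N))"
  proof
    fix k
    show "w k = bond N j (w j) (w (Suc j mod N)) k"
      using j ne sj assms(1) by (cases "k < N") (auto simp: bond_def ring_string_def)
  qed
  show thesis
  proof (cases "w j = PI"; cases "w (Suc j mod N) = PI")
    assume "w j = PI" "w (Suc j mod N) = PI"
    then show thesis using w that(1) by simp
  next
    assume "w j = PI" "w (Suc j mod N) \<noteq> PI"
    then show thesis using w that(2)[OF sj] by simp
  next
    assume "w j \<noteq> PI" "w (Suc j mod N) = PI"
    then show thesis using w that(2)[OF j(1)] assms(3) by simp
  next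
    assume "w j \<noteq> PI" "w (Suc j mod N) \<noteq> PI"
    then show thesis using w that(3)[OF j(1)] by simp
  qed
qed

lemma ring_offset_less_2:
  fixes i j N :: nat
  assumes "i < N" "j < N" "(i + N - j) mod N < 2"
  shows "i = j \<or> i = Suc j mod N"
proof (cases "j \<le> i")
  case True
  then have "(i + N - j) mod N = (i - j + N) mod N" by (simp add: add.commute)
  also have "\<dots> = i - j" using assms by simp
  finally have "i - j < 2" using assms by simp
  then have "i = j \<or> i = Suc j" using True by linarith
  then show ?thesis using assms by auto
next
  case False
  then have "i + N - j < 2" using assms by simp
  then show ?thesis using False assms by (cases "Suc j = N") auto
qed

lemma ring_offset_less_1:
  fixes i j N :: nat
  assumes "i < N" "j < N" "(i + N - j) mod N < 1"
  shows "i = j"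
proof (cases "j \<le> i")
  case True
  then have "(i + N - j) mod N = (i - j + N) mod N" by (simp add: add.commute)
  also have "\<dots> = i - j" using assms by simp
  finally show ?thesis using assms True by simp
next
  case False
  then show ?thesis using assms by simp
qed

lemma support_le_obtain_run:
  assumes "support N s \<le> k" "0 < N" "\<exists>i<N. s i \<noteq> PI"
  obtains j where "j < N" "\<forall>i<N. s i \<noteq> PI \<longrightarrow> (i + N - j) mod N < k"
proof -
  let ?P = "\<lambda>k. \<exists>j<N. \<forall>i<N. s i \<noteq> PI \<longrightarrow> (i + N - j) mod N < k"
  have "?P N" using assms(2) by (intro exI[of _ 0]) auto
  then have "?P (LEAST k. ?P k)" by (rule LeastI)
  moreover have "support N s = (LEAST k. ?P k)" using assms(3) by (auto simp: support_def)
  ultimately show thesis using assms(1) that by fastforce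
qed

lemma support_le_2_bond_supported:
  assumes "support N s \<le> 2" "0 < N"
  shows "bond_supported N s"
proof (cases "\<exists>i<N. s i \<noteq> PI")
  case True
  then obtain j where "j < N" "\<forall>i<N. s i \<noteq> PI \<longrightarrow> (i + N - j) mod N < 2"
    using support_le_obtain_run[OF assms] by blast
  then show ?thesis unfolding bond_supported_def using ring_offset_less_2 by blast
qed (use assms in \<open>auto simp: bond_supported_def\<close>)

lemma support_le_1_single_site:
  assumes "support N s \<le> 1" "0 < N" "a < N" "b < N" "s a \<noteq> PI" "s b \<noteq> PI"
  shows "a = b"
proof -
  obtain j where "j < N" "\<forall>i<N. s i \<noteq> PI \<longrightarrow> (i + N - j) mod N < 1"
    using support_le_obtain_run[OF assms(1,2)] assms(3,5) by blast
  then show ?thesis using ring_offset_less_1 assms by metis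
qed

lemma ham_pauli_expansion: "ham N JX JY hX hY hZ = (\<lambda>a b. \<Sum>i<N.
       of_real JX * pstring N (bond N i PX PX) a b + of_real JY * pstring N (bond N i PY PY) a b
     + of_real hX * pstring N (onsite i PX) a b + of_real hY * pstring N (onsite i PY) a b
     + of_real hZ * pstring N (onsite i PZ) a b)"
  unfolding ham_def site1_eq_onsite site2_eq_bond ..

lemma Q0_pauli_expansion:
  assumes "1 < N"
  shows "Q0 N hX hY = (\<lambda>a b. \<Sum>i<N. (-1) ^ (i + 1) *
   (of_real hX * of_real hX * pstring N (bond N i PX PX) a b
  + of_real hX * of_real hY * pstring N (bond N i PX PY) a b
  + of_real hY * of_real hX * pstring N (bond N i PY PX) a b
  + of_real hY * of_real hY * pstring N (bond N i PY PY) a b))"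
proof -
  have "\<And>i. Suc i mod N \<noteq> i" "\<And>i. i \<noteq> Suc i mod N" using Suc_mod_neq[OF assms] by metis+
  then show ?thesis
    unfolding Q0_def site1_eq_onsite
    by (simp add: mmul_add_left mmul_add_right mmul_cmult_left mmul_cmult_right mmul_pstring
        string_mult_onsite_onsite string_phase_onsite_onsite algebra_simps)
qed

lemma pauli_span_ham: "1 < N \<Longrightarrow> pauli_span N (ham N JX JY hX hY hZ)"
  unfolding ham_pauli_expansion
  by (intro pauli_span_sum pauli_span_add pauli_span_cmult pauli_span_pstring ballI finite_lessThan)
    (auto intro: ring_string_bond ring_string_onsite)

lemma pauli_span_Q0: "1 < N \<Longrightarrow> pauli_span N (Q0 N hX hY)"
  unfolding Q0_pauli_expansion
  by (intro pauli_span_sum pauli_span_add pauli_span_cmult pauli_span_pstring ballI finite_lessThan)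
    (auto intro: ring_string_bond)

lemma pcoef_ham: "pcoef N w (ham N JX JY hX hY hZ) = (\<Sum>j<N.
    of_real JX * (if \<forall>k<N. w k = bond N j PX PX k then 1 else 0)
  + of_real JY * (if \<forall>k<N. w k = bond N j PY PY k then 1 else 0)
  + of_real hX * (if \<forall>k<N. w k = onsite j PX k then 1 else 0)
  + of_real hY * (if \<forall>k<N. w k = onsite j PY k then 1 else 0)
  + of_real hZ * (if \<forall>k<N. w k = onsite j PZ k then 1 else 0))"
  unfolding ham_pauli_expansion by (simp only: pcoef_sum pcoef_add pcoef_cmult pcoef_pstring)

lemma pcoef_Q0: "1 < N \<Longrightarrow> pcoef N w (Q0 N hX hY) = (\<Sum>j<N. (-1) ^ (j + 1) * (
    of_real hX * of_real hX * (if \<forall>k<N. w k = bond N j PX PX k then 1 else 0)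
  + of_real hX * of_real hY * (if \<forall>k<N. w k = bond N j PX PY k then 1 else 0)
  + of_real hY * of_real hX * (if \<forall>k<N. w k = bond N j PY PX k then 1 else 0)
  + of_real hY * of_real hY * (if \<forall>k<N. w k = bond N j PY PY k then 1 else 0)))"
  by (simp only: Q0_pauli_expansion pcoef_sum pcoef_add pcoef_cmult pcoef_pstring)

lemma sum_lessThan_single:
  fixes N :: nat and f :: "nat \<Rightarrow> 'a::comm_monoid_add"
  assumes "i < N" "\<And>j. j < N \<Longrightarrow> j \<noteq> i \<Longrightarrow> f j = 0"
  shows "(\<Sum>j<N. f j) = f i"
proof -
  from assms have "(\<Sum>j<N. f j) = (\<Sum>j\<in>{i}. f j)" by (intro sum.mono_neutral_right) auto
  then show ?thesis by simp
qed

context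
  fixes N :: nat
  assumes N_gt_2: "2 < N"
begin

lemma pcoef_ham_bond:
  assumes "i < N" "A \<noteq> PI" "B \<noteq> PI"
  shows "pcoef N (bond N i A B) (ham N JX JY hX hY hZ) =
     of_real JX * (if A = PX \<and> B = PX then 1 else 0) + of_real JY * (if A = PY \<and> B = PY then 1 else 0)"
  unfolding pcoef_ham using N_gt_2 assms
  by (subst sum_lessThan_single[OF assms(1)]) (simp_all add: bond_eq_bond_iff bond_neq_onsite)

lemma pcoef_ham_onsite:
  assumes "i < N" "A \<noteq> PI"
  shows "pcoef N (onsite i A) (ham N JX JY hX hY hZ) = of_real hX * (if A = PX then 1 else 0)
     + of_real hY * (if A = PY then 1 else 0) + of_real hZ * (if A = PZ then 1 else 0)"
  unfolding pcoef_ham using N_gt_2 assms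
  by (subst sum_lessThan_single[OF assms(1)]) (simp_all add: onsite_eq_onsite_iff bond_neq_onsite)

lemma pcoef_ham_identity: "pcoef N (\<lambda>_. PI) (ham N JX JY hX hY hZ) = 0"
  unfolding pcoef_ham using N_gt_2
  by (intro sum.neutral) (simp add: bond_neq_identity onsite_neq_identity)

end

lemma pcoef_Q0_bond:
  assumes "2 < N" "i < N" "A \<noteq> PI" "B \<noteq> PI"
  shows "pcoef N (bond N i A B) (Q0 N hX hY) = (-1) ^ (i + 1) * (
     of_real hX * of_real hX * (if A = PX \<and> B = PX then 1 else 0)
   + of_real hX * of_real hY * (if A = PX \<and> B = PY then 1 else 0)
   + of_real hY * of_real hX * (if A = PY \<and> B = PX then 1 else 0)
   + of_real hY * of_real hY * (if A = PY \<and> B = PY then 1 else 0))"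
proof -
  have "1 < N" using assms(1) by simp
  then show ?thesis
    unfolding pcoef_Q0[OF \<open>1 < N\<close>] using assms
    by (subst sum_lessThan_single[OF assms(2)]) (simp_all add: bond_eq_bond_iff)
qed

lemma pcoef_Q0_onsite:
  assumes "1 < N" "i < N" "A \<noteq> PI"
  shows "pcoef N (onsite i A) (Q0 N hX hY) = 0"
  unfolding pcoef_Q0[OF assms(1)] using assms by (intro sum.neutral) (simp add: bond_neq_onsite)

lemma pcoef_Q0_identity: "1 < N \<Longrightarrow> pcoef N (\<lambda>_. PI) (Q0 N hX hY) = 0"
  unfolding pcoef_Q0 by (intro sum.neutral) (simp add: bond_neq_identity)

lemma pcoef_ham_not_bond_supported:
  assumes "\<not> bond_supported N w"
  shows "pcoef N w (ham N JX JY hX hY hZ) = 0"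
proof -
  have bond: "\<not> (\<forall>k<N. w k = bond N j A B k)" if "j < N" for j A B
    using assms bond_supported_cong bond_supported_bond[OF that] by blast
  have onsite: "\<not> (\<forall>k<N. w k = onsite j A k)" if "j < N" for j A
    using assms bond_supported_cong bond_supported_onsite[OF that] by blast
  show ?thesis unfolding pcoef_ham by (intro sum.neutral) (simp add: bond onsite)
qed

lemma pcoef_Q0_not_bond_supported:
  assumes "1 < N" "\<not> bond_supported N w"
  shows "pcoef N w (Q0 N hX hY) = 0"
proof -
  have bond: "\<not> (\<forall>k<N. w k = bond N j A B k)" if "j < N" for j A B
    using assms bond_supported_cong bond_supported_bond[OF that] by blast
  show ?thesis unfolding pcoef_Q0[OF assms(1)] by (intro sum.neutral) (simp add: bond)
qed

section \<open>Commutators with H on three-site windows\<close>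

definition bond_local :: "nat \<Rightarrow> ((nat \<Rightarrow> pauli) \<Rightarrow> complex) \<Rightarrow> bool" where
  "bond_local N q \<longleftrightarrow> (\<forall>w. q w \<noteq> 0 \<longrightarrow> bond_supported N w)"

lemma local_op_2_bond_local:
  assumes "local_op 2 N Q" "0 < N"
  shows "bond_local N (\<lambda>w. pcoef N w Q)"
proof -
  obtain S c where S: "finite S" "\<forall>s\<in>S. (\<forall>i\<ge>N. s i = PI) \<and> support N s \<le> 2"
     "Q = (\<lambda>a b. \<Sum>s\<in>S. c s * pstring N s a b)"
    using assms(1) unfolding local_op_def by blast
  show ?thesis unfolding bond_local_def
  proof (intro allI impI)
    fix w assume "pcoef N w Q \<noteq> 0"
    then obtain s where "s \<in> S" "\<forall>i<N. w i = s i" using pcoef_lincomb_nonzero S(3) by blast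
    then show "bond_supported N w"
      using S(2) support_le_2_bond_supported assms(2) bond_supported_cong by blast
  qed
qed

lemma bond_local_far_zero:
  assumes "bond_local N q" "a < N" "b < N" "a \<noteq> b" "b \<noteq> Suc a mod N" "a \<noteq> Suc b mod N"
    "w a \<noteq> PI" "w b \<noteq> PI"
  shows "q w = 0"
proof (rule ccontr)
  assume "q w \<noteq> 0"
  then obtain j where "j < N" "\<forall>k<N. w k \<noteq> PI \<longrightarrow> k = j \<or> k = Suc j mod N"
    using assms(1) unfolding bond_local_def bond_supported_def by blast
  then show False using assms by metis
qed

text \<open>The coefficient of u in Q h_i - h_i Q, where h_i is the part of H at bond i and q is the
coefficient function of Q.\<close>

definition commutator_term :: "nat \<Rightarrow> real \<Rightarrow> real \<Rightarrow> real \<Rightarrow> real \<Rightarrow> real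
    \<Rightarrow> ((nat \<Rightarrow> pauli) \<Rightarrow> complex) \<Rightarrow> (nat \<Rightarrow> pauli) \<Rightarrow> nat \<Rightarrow> complex" where
  "commutator_term N JX JY hX hY hZ q u i =
     of_real JX * (string_phase N (bond N i PX PX) u - string_phase N u (bond N i PX PX)) * q (string_mult u (bond N i PX PX))
   + of_real JY * (string_phase N (bond N i PY PY) u - string_phase N u (bond N i PY PY)) * q (string_mult u (bond N i PY PY))
   + of_real hX * (string_phase N (onsite i PX) u - string_phase N u (onsite i PX)) * q (string_mult u (onsite i PX))
   + of_real hY * (string_phase N (onsite i PY) u - string_phase N u (onsite i PY)) * q (string_mult u (onsite i PY))
   + of_real hZ * (string_phase N (onsite i PZ) u - string_phase N u (onsite i PZ)) * q (string_mult u (onsite i PZ))"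

lemma pcoef_commutator:
  "(\<Sum>i<N. commutator_term N JX JY hX hY hZ (\<lambda>w. pcoef N w Q) u i) =
   pcoef N u (mmul N Q (ham N JX JY hX hY hZ)) - pcoef N u (mmul N (ham N JX JY hX hY hZ) Q)"
proof -
  have l: "pcoef N u (mmul N Q (ham N JX JY hX hY hZ)) = (\<Sum>i<N.
       of_real JX * (string_phase N (bond N i PX PX) u * pcoef N (string_mult u (bond N i PX PX)) Q)
     + of_real JY * (string_phase N (bond N i PY PY) u * pcoef N (string_mult u (bond N i PY PY)) Q)
     + of_real hX * (string_phase N (onsite i PX) u * pcoef N (string_mult u (onsite i PX)) Q)
     + of_real hY * (string_phase N (onsite i PY) u * pcoef N (string_mult u (onsite i PY)) Q)
     + of_real hZ * (string_phase N (onsite i PZ) u * pcoef N (string_mult u (onsite i PZ)) Q))"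
    unfolding ham_pauli_expansion
    by (simp only: mmul_sum_right mmul_add_right mmul_cmult_right pcoef_sum pcoef_add pcoef_cmult
        pcoef_mmul_right)
  have r: "pcoef N u (mmul N (ham N JX JY hX hY hZ) Q) = (\<Sum>i<N.
       of_real JX * (string_phase N u (bond N i PX PX) * pcoef N (string_mult u (bond N i PX PX)) Q)
     + of_real JY * (string_phase N u (bond N i PY PY) * pcoef N (string_mult u (bond N i PY PY)) Q)
     + of_real hX * (string_phase N u (onsite i PX) * pcoef N (string_mult u (onsite i PX)) Q)
     + of_real hY * (string_phase N u (onsite i PY) * pcoef N (string_mult u (onsite i PY)) Q)
     + of_real hZ * (string_phase N u (onsite i PZ) * pcoef N (string_mult u (onsite i PZ)) Q))"
    unfolding ham_pauli_expansion
    by (simp only: mmul_sum_left mmul_add_left mmul_cmult_left pcoef_sum pcoef_add pcoef_cmult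
        pcoef_mmul_left)
  show ?thesis
    unfolding l r commutator_term_def by (simp add: sum_subtractf[symmetric] algebra_simps)
qed

lemma commutes_imp_commutator_terms_zero:
  "commutes N Q (ham N JX JY hX hY hZ) \<Longrightarrow>
    \<forall>u. (\<Sum>i<N. commutator_term N JX JY hX hY hZ (\<lambda>w. pcoef N w Q) u i) = 0"
  by (simp add: pcoef_commutator commutes_def)

text \<open>Six consecutive sites p, p1, ..., p5 of the ring; N \<ge> 6 is what makes them distinct.\<close>

locale ring_window =
  fixes N p :: nat
  assumes N6: "6 \<le> N" and p_less: "p < N"
begin

definition "p1 = Suc p mod N"
definition "p2 = Suc p1 mod N"
definition "p3 = Suc p2 mod N"
definition "p4 = Suc p3 mod N"
definition "p5 = Suc p4 mod N"

lemma window_offsets: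
  "p1 = (p + 1) mod N" "p2 = (p + 2) mod N" "p3 = (p + 3) mod N" "p4 = (p + 4) mod N" "p5 = (p + 5) mod N"
  by (simp_all add: p1_def p2_def p3_def p4_def p5_def mod_Suc_eq eval_nat_numeral)

lemma window_sites_less [simp]: "p < N" "p1 < N" "p2 < N" "p3 < N" "p4 < N" "p5 < N"
  using N6 p_less by (simp_all add: window_offsets)

lemma window_Suc [simp]:
  "Suc p mod N = p1" "Suc p1 mod N = p2" "Suc p2 mod N = p3" "Suc p3 mod N = p4" "Suc p4 mod N = p5"
  by (simp_all add: p1_def p2_def p3_def p4_def p5_def)

lemma window_sites_distinct [simp]:
  "p \<noteq> p1" "p \<noteq> p2" "p \<noteq> p3" "p \<noteq> p4" "p \<noteq> p5" "p1 \<noteq> p2" "p1 \<noteq> p3" "p1 \<noteq> p4" "p1 \<noteq> p5"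
  "p2 \<noteq> p3" "p2 \<noteq> p4" "p2 \<noteq> p5" "p3 \<noteq> p4" "p3 \<noteq> p5" "p4 \<noteq> p5"
proof -
  have d: "(p + a) mod N \<noteq> (p + b) mod N" if "a < b" "b \<le> 5" for a b
    using add_mod_cancel_left_less[of p a N b] N6 that by auto
  show "p \<noteq> p1" "p \<noteq> p2" "p \<noteq> p3" "p \<noteq> p4" "p \<noteq> p5" "p1 \<noteq> p2" "p1 \<noteq> p3" "p1 \<noteq> p4" "p1 \<noteq> p5"
    "p2 \<noteq> p3" "p2 \<noteq> p4" "p2 \<noteq> p5" "p3 \<noteq> p4" "p3 \<noteq> p5" "p4 \<noteq> p5"
    unfolding window_offsets
    using d[of 0 1] d[of 0 2] d[of 0 3] d[of 0 4] d[of 0 5] d[of 1 2] d[of 1 3] d[of 1 4] d[of 1 5]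
      d[of 2 3] d[of 2 4] d[of 2 5] d[of 3 4] d[of 3 5] d[of 4 5] p_less
    by (simp_all del: window_Suc)
qed

lemmas window_sites_distinct' [simp] = window_sites_distinct[symmetric]

definition window_string :: "pauli \<Rightarrow> pauli \<Rightarrow> pauli \<Rightarrow> pauli \<Rightarrow> pauli \<Rightarrow> nat \<Rightarrow> pauli" where
  "window_string a0 a1 a2 a3 a4 = (\<lambda>_. PI)(p := a0, p1 := a1, p2 := a2, p3 := a3, p4 := a4)"

lemma window_string_apply:
  "window_string a0 a1 a2 a3 a4 x = (if x = p then a0 else if x = p1 then a1 else if x = p2 then a2
     else if x = p3 then a3 else if x = p4 then a4 else PI)"
  by (auto simp: window_string_def)

lemma string_mult_window_string:
  "string_mult (window_string a0 a1 a2 a3 a4) (window_string b0 b1 b2 b3 b4) =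
   window_string (pauli_mult a0 b0) (pauli_mult a1 b1) (pauli_mult a2 b2) (pauli_mult a3 b3) (pauli_mult a4 b4)"
  by (auto simp: fun_eq_iff string_mult_def window_string_apply)

lemma string_phase_window_string:
  "string_phase N (window_string a0 a1 a2 a3 a4) (window_string b0 b1 b2 b3 b4) =
   pauli_phase a0 b0 * pauli_phase a1 b1 * pauli_phase a2 b2 * pauli_phase a3 b3 * pauli_phase a4 b4"
proof -
  have "string_phase N (window_string a0 a1 a2 a3 a4) (window_string b0 b1 b2 b3 b4) =
     (\<Prod>i\<in>{p, p1, p2, p3, p4}. pauli_phase (window_string a0 a1 a2 a3 a4 i) (window_string b0 b1 b2 b3 b4 i))"
    unfolding string_phase_def by (rule prod.mono_neutral_right) (auto simp: window_string_apply)
  then show ?thesis by (simp add: window_string_apply)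
qed

lemma bond_window_string:
  "bond N p P P' = window_string P P' PI PI PI" "bond N p1 P P' = window_string PI P P' PI PI"
  "bond N p2 P P' = window_string PI PI P P' PI" "bond N p3 P P' = window_string PI PI PI P P'"
  "onsite p P = window_string P PI PI PI PI" "onsite p1 P = window_string PI P PI PI PI"
  "onsite p2 P = window_string PI PI P PI PI" "onsite p3 P = window_string PI PI PI P PI"
  by (auto simp: fun_eq_iff bond_def onsite_def window_string_apply)

lemma window_string_bond:
  "window_string a0 a1 PI PI PI = bond N p a0 a1" "window_string PI a1 a2 PI PI = bond N p1 a1 a2"
  "window_string PI PI a2 a3 PI = bond N p2 a2 a3" "window_string PI PI PI a3 a4 = bond N p3 a3 a4"
  by (auto simp: fun_eq_iff bond_def window_string_apply)

lemma window_string_far_zero: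
  assumes "bond_local N q"
  shows "a0 \<noteq> PI \<Longrightarrow> a2 \<noteq> PI \<Longrightarrow> q (window_string a0 a1 a2 a3 a4) = 0"
    "a0 \<noteq> PI \<Longrightarrow> a3 \<noteq> PI \<Longrightarrow> q (window_string a0 a1 a2 a3 a4) = 0"
    "a0 \<noteq> PI \<Longrightarrow> a4 \<noteq> PI \<Longrightarrow> q (window_string a0 a1 a2 a3 a4) = 0"
    "a1 \<noteq> PI \<Longrightarrow> a3 \<noteq> PI \<Longrightarrow> q (window_string a0 a1 a2 a3 a4) = 0"
    "a1 \<noteq> PI \<Longrightarrow> a4 \<noteq> PI \<Longrightarrow> q (window_string a0 a1 a2 a3 a4) = 0"
    "a2 \<noteq> PI \<Longrightarrow> a4 \<noteq> PI \<Longrightarrow> q (window_string a0 a1 a2 a3 a4) = 0"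
  apply (rule bond_local_far_zero[OF assms, of p p2]; simp add: window_string_apply)
  apply (rule bond_local_far_zero[OF assms, of p p3]; simp add: window_string_apply)
  apply (rule bond_local_far_zero[OF assms, of p p4]; simp add: window_string_apply)
  apply (rule bond_local_far_zero[OF assms, of p1 p3]; simp add: window_string_apply)
  apply (rule bond_local_far_zero[OF assms, of p1 p4]; simp add: window_string_apply)
  apply (rule bond_local_far_zero[OF assms, of p2 p4]; simp add: window_string_apply)
  done

text \<open>All other terms of H act on sites disjoint from the window string and commute with it.\<close>

lemma window_commutator_sum:
  "(\<Sum>i<N. commutator_term N JX JY hX hY hZ q (window_string PI A D C PI) i) =
      commutator_term N JX JY hX hY hZ q (window_string PI A D C PI) p
    + commutator_term N JX JY hX hY hZ q (window_string PI A D C PI) p1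
    + commutator_term N JX JY hX hY hZ q (window_string PI A D C PI) p2
    + commutator_term N JX JY hX hY hZ q (window_string PI A D C PI) p3"
proof -
  have "(\<Sum>i<N. commutator_term N JX JY hX hY hZ q (window_string PI A D C PI) i)
      = (\<Sum>i\<in>{p, p1, p2, p3}. commutator_term N JX JY hX hY hZ q (window_string PI A D C PI) i)"
  proof (rule sum.mono_neutral_right)
    show "\<forall>i\<in>{..<N} - {p, p1, p2, p3}. commutator_term N JX JY hX hY hZ q (window_string PI A D C PI) i = 0"
    proof
      fix i assume i: "i \<in> {..<N} - {p, p1, p2, p3}"
      then have "Suc i mod N \<noteq> Suc p mod N \<and> Suc i mod N \<noteq> Suc p1 mod N \<and> Suc i mod N \<noteq> Suc p2 mod N"
        using Suc_mod_inj[of i N p] Suc_mod_inj[of i N p1] Suc_mod_inj[of i N p2] by (auto simp del: window_Suc)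
      then have s: "Suc i mod N \<noteq> p1 \<and> Suc i mod N \<noteq> p2 \<and> Suc i mod N \<noteq> p3" by simp
      then have disj: "\<forall>k<N. t k = PI \<or> window_string PI A D C PI k = PI"
        if "\<forall>k. t k \<noteq> PI \<longrightarrow> k = i \<or> k = Suc i mod N" for t
        using that i s by (auto simp: window_string_apply)
      have "\<forall>k. bond N i P P' k \<noteq> PI \<longrightarrow> k = i \<or> k = Suc i mod N" for P P' by (auto simp: bond_def)
      moreover have "\<forall>k. onsite i P k \<noteq> PI \<longrightarrow> k = i \<or> k = Suc i mod N" for P by (auto simp: onsite_def)
      ultimately show "commutator_term N JX JY hX hY hZ q (window_string PI A D C PI) i = 0"
        unfolding commutator_term_def using disj string_phase_disjoint by simp
    qed
  qed auto
  then show ?thesis by simp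
qed

text \<open>Each equation is the coefficient, in [Q, H] = 0, of the three-site string on p1, p2, p3
that names it.\<close>

lemma window_equations:
  assumes L: "bond_local N q" and H: "\<forall>u. (\<Sum>i<N. commutator_term N JX JY hX hY hZ q u i) = 0"
  shows XXY: "- of_real JY * q (bond N p1 PX PZ) = 0"
      and YYX: "of_real JX * q (bond N p1 PY PZ) = 0"
      and ZXY: "- of_real JY * q (bond N p1 PZ PZ) = 0"
      and ZZX: "- of_real JX * q (bond N p1 PZ PY) = 0"
      and ZZY: "of_real JY * q (bond N p1 PZ PX) = 0"
      and XZX: "- of_real JX * q (bond N p1 PX PY) - of_real JX * q (bond N p2 PY PX) = 0"
      and YZY: "of_real JY * q (bond N p1 PY PX) + of_real JY * q (bond N p2 PX PY) = 0"
      and XZY: "- of_real JX * q (bond N p2 PY PY) + of_real JY * q (bond N p1 PX PX) = 0"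
      and YZX: "- of_real JX * q (bond N p1 PY PY) + of_real JY * q (bond N p2 PX PX) = 0"
      and IXX: "- of_real hY * q (bond N p2 PX PZ) - of_real hY * q (bond N p2 PZ PX) + of_real hZ * q (bond N p2 PX PY) + of_real hZ * q (bond N p2 PY PX) = 0"
      and IYY: "of_real hX * q (bond N p2 PY PZ) + of_real hX * q (bond N p2 PZ PY) - of_real hZ * q (bond N p2 PX PY) - of_real hZ * q (bond N p2 PY PX) = 0"
      and IXY: "of_real JX * q (onsite p3 PZ) - of_real JY * q (onsite p2 PZ) + of_real hX * q (bond N p2 PX PZ) - of_real hY * q (bond N p2 PZ PY) - of_real hZ * q (bond N p2 PX PX) + of_real hZ * q (bond N p2 PY PY) = 0"
      and IYX: "of_real JX * q (onsite p2 PZ) - of_real JY * q (onsite p3 PZ) + of_real hX * q (bond N p2 PZ PX) - of_real hY * q (bond N p2 PY PZ) - of_real hZ * q (bond N p2 PX PX) + of_real hZ * q (bond N p2 PY PY) = 0"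
      and IXZ: "- of_real JX * q (onsite p3 PY) - of_real hX * q (bond N p2 PX PY) + of_real hY * q (bond N p2 PX PX) - of_real hY * q (bond N p2 PZ PZ) + of_real hZ * q (bond N p2 PY PZ) = 0"
      and IZX: "- of_real JX * q (onsite p2 PY) - of_real hX * q (bond N p2 PY PX) + of_real hY * q (bond N p2 PX PX) - of_real hY * q (bond N p2 PZ PZ) + of_real hZ * q (bond N p2 PZ PY) = 0"
      and IYZ: "of_real JY * q (onsite p3 PX) - of_real hX * q (bond N p2 PY PY) + of_real hX * q (bond N p2 PZ PZ) + of_real hY * q (bond N p2 PY PX) - of_real hZ * q (bond N p2 PX PZ) = 0"
      and IZY: "of_real JY * q (onsite p2 PX) - of_real hX * q (bond N p2 PY PY) + of_real hX * q (bond N p2 PZ PZ) + of_real hY * q (bond N p2 PX PY) - of_real hZ * q (bond N p2 PZ PX) = 0"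
      and IIX: "- of_real JY * q (bond N p2 PY PZ) - of_real JY * q (bond N p3 PZ PY) - of_real hY * q (onsite p3 PZ) + of_real hZ * q (onsite p3 PY) = 0"
      and IIY: "of_real JX * q (bond N p2 PX PZ) + of_real JX * q (bond N p3 PZ PX) + of_real hX * q (onsite p3 PZ) - of_real hZ * q (onsite p3 PX) = 0"
      and IIZ: "- of_real JX * q (bond N p2 PX PY) - of_real JX * q (bond N p3 PY PX) + of_real JY * q (bond N p2 PY PX) + of_real JY * q (bond N p3 PX PY) - of_real hX * q (onsite p3 PY) + of_real hY * q (onsite p3 PX) = 0"
proof -
  have window_eq: "e = 0"
    if "(\<Sum>i<N. commutator_term N JX JY hX hY hZ q (window_string PI A D C PI) i) = 2 * \<i> * e"
    for A D C e
    using H that by simp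
  show "- of_real JY * q (bond N p1 PX PZ) = 0"
    by (rule window_eq[of PX PX PY]) (simp only: window_commutator_sum,
      simp only: commutator_term_def bond_window_string string_mult_window_string string_phase_window_string, simp add: window_string_bond window_string_far_zero[OF L] algebra_simps)
  show "of_real JX * q (bond N p1 PY PZ) = 0"
    by (rule window_eq[of PY PY PX]) (simp only: window_commutator_sum,
      simp only: commutator_term_def bond_window_string string_mult_window_string string_phase_window_string, simp add: window_string_bond window_string_far_zero[OF L] algebra_simps)
  show "- of_real JY * q (bond N p1 PZ PZ) = 0"
    by (rule window_eq[of PZ PX PY]) (simp only: window_commutator_sum,
      simp only: commutator_term_def bond_window_string string_mult_window_string string_phase_window_string, simp add: window_string_bond window_string_far_zero[OF L] algebra_simps)
  show "- of_real JX * q (bond N p1 PZ PY) = 0"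
    by (rule window_eq[of PZ PZ PX]) (simp only: window_commutator_sum,
      simp only: commutator_term_def bond_window_string string_mult_window_string string_phase_window_string, simp add: window_string_bond window_string_far_zero[OF L] algebra_simps)
  show "of_real JY * q (bond N p1 PZ PX) = 0"
    by (rule window_eq[of PZ PZ PY]) (simp only: window_commutator_sum,
      simp only: commutator_term_def bond_window_string string_mult_window_string string_phase_window_string, simp add: window_string_bond window_string_far_zero[OF L] algebra_simps)
  show "- of_real JX * q (bond N p1 PX PY) - of_real JX * q (bond N p2 PY PX) = 0"
    by (rule window_eq[of PX PZ PX]) (simp only: window_commutator_sum,
      simp only: commutator_term_def bond_window_string string_mult_window_string string_phase_window_string, simp add: window_string_bond window_string_far_zero[OF L] algebra_simps)
  show "of_real JY * q (bond N p1 PY PX) + of_real JY * q (bond N p2 PX PY) = 0"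
    by (rule window_eq[of PY PZ PY]) (simp only: window_commutator_sum,
      simp only: commutator_term_def bond_window_string string_mult_window_string string_phase_window_string, simp add: window_string_bond window_string_far_zero[OF L] algebra_simps)
  show "- of_real JX * q (bond N p2 PY PY) + of_real JY * q (bond N p1 PX PX) = 0"
    by (rule window_eq[of PX PZ PY]) (simp only: window_commutator_sum,
      simp only: commutator_term_def bond_window_string string_mult_window_string string_phase_window_string, simp add: window_string_bond window_string_far_zero[OF L] algebra_simps)
  show "- of_real JX * q (bond N p1 PY PY) + of_real JY * q (bond N p2 PX PX) = 0"
    by (rule window_eq[of PY PZ PX]) (simp only: window_commutator_sum,
      simp only: commutator_term_def bond_window_string string_mult_window_string string_phase_window_string, simp add: window_string_bond window_string_far_zero[OF L] algebra_simps)
  show "- of_real hY * q (bond N p2 PX PZ) - of_real hY * q (bond N p2 PZ PX) + of_real hZ * q (bond N p2 PX PY) + of_real hZ * q (bond N p2 PY PX) = 0"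
    by (rule window_eq[of PI PX PX]) (simp only: window_commutator_sum,
      simp only: commutator_term_def bond_window_string string_mult_window_string string_phase_window_string, simp add: window_string_bond window_string_far_zero[OF L] algebra_simps)
  show "of_real hX * q (bond N p2 PY PZ) + of_real hX * q (bond N p2 PZ PY) - of_real hZ * q (bond N p2 PX PY) - of_real hZ * q (bond N p2 PY PX) = 0"
    by (rule window_eq[of PI PY PY]) (simp only: window_commutator_sum,
      simp only: commutator_term_def bond_window_string string_mult_window_string string_phase_window_string, simp add: window_string_bond window_string_far_zero[OF L] algebra_simps)
  show "of_real JX * q (onsite p3 PZ) - of_real JY * q (onsite p2 PZ) + of_real hX * q (bond N p2 PX PZ) - of_real hY * q (bond N p2 PZ PY) - of_real hZ * q (bond N p2 PX PX) + of_real hZ * q (bond N p2 PY PY) = 0"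
    by (rule window_eq[of PI PX PY]) (simp only: window_commutator_sum,
      simp only: commutator_term_def bond_window_string string_mult_window_string string_phase_window_string, simp add: window_string_bond window_string_far_zero[OF L] algebra_simps)
  show "of_real JX * q (onsite p2 PZ) - of_real JY * q (onsite p3 PZ) + of_real hX * q (bond N p2 PZ PX) - of_real hY * q (bond N p2 PY PZ) - of_real hZ * q (bond N p2 PX PX) + of_real hZ * q (bond N p2 PY PY) = 0"
    by (rule window_eq[of PI PY PX]) (simp only: window_commutator_sum,
      simp only: commutator_term_def bond_window_string string_mult_window_string string_phase_window_string, simp add: window_string_bond window_string_far_zero[OF L] algebra_simps)
  show "- of_real JX * q (onsite p3 PY) - of_real hX * q (bond N p2 PX PY) + of_real hY * q (bond N p2 PX PX) - of_real hY * q (bond N p2 PZ PZ) + of_real hZ * q (bond N p2 PY PZ) = 0"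
    by (rule window_eq[of PI PX PZ]) (simp only: window_commutator_sum,
      simp only: commutator_term_def bond_window_string string_mult_window_string string_phase_window_string, simp add: window_string_bond window_string_far_zero[OF L] algebra_simps)
  show "- of_real JX * q (onsite p2 PY) - of_real hX * q (bond N p2 PY PX) + of_real hY * q (bond N p2 PX PX) - of_real hY * q (bond N p2 PZ PZ) + of_real hZ * q (bond N p2 PZ PY) = 0"
    by (rule window_eq[of PI PZ PX]) (simp only: window_commutator_sum,
      simp only: commutator_term_def bond_window_string string_mult_window_string string_phase_window_string, simp add: window_string_bond window_string_far_zero[OF L] algebra_simps)
  show "of_real JY * q (onsite p3 PX) - of_real hX * q (bond N p2 PY PY) + of_real hX * q (bond N p2 PZ PZ) + of_real hY * q (bond N p2 PY PX) - of_real hZ * q (bond N p2 PX PZ) = 0"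
    by (rule window_eq[of PI PY PZ]) (simp only: window_commutator_sum,
      simp only: commutator_term_def bond_window_string string_mult_window_string string_phase_window_string, simp add: window_string_bond window_string_far_zero[OF L] algebra_simps)
  show "of_real JY * q (onsite p2 PX) - of_real hX * q (bond N p2 PY PY) + of_real hX * q (bond N p2 PZ PZ) + of_real hY * q (bond N p2 PX PY) - of_real hZ * q (bond N p2 PZ PX) = 0"
    by (rule window_eq[of PI PZ PY]) (simp only: window_commutator_sum,
      simp only: commutator_term_def bond_window_string string_mult_window_string string_phase_window_string, simp add: window_string_bond window_string_far_zero[OF L] algebra_simps)
  show "- of_real JY * q (bond N p2 PY PZ) - of_real JY * q (bond N p3 PZ PY) - of_real hY * q (onsite p3 PZ) + of_real hZ * q (onsite p3 PY) = 0"
    by (rule window_eq[of PI PI PX]) (simp only: window_commutator_sum,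
      simp only: commutator_term_def bond_window_string string_mult_window_string string_phase_window_string, simp add: window_string_bond window_string_far_zero[OF L] algebra_simps)
  show "of_real JX * q (bond N p2 PX PZ) + of_real JX * q (bond N p3 PZ PX) + of_real hX * q (onsite p3 PZ) - of_real hZ * q (onsite p3 PX) = 0"
    by (rule window_eq[of PI PI PY]) (simp only: window_commutator_sum,
      simp only: commutator_term_def bond_window_string string_mult_window_string string_phase_window_string, simp add: window_string_bond window_string_far_zero[OF L] algebra_simps)
  show "- of_real JX * q (bond N p2 PX PY) - of_real JX * q (bond N p3 PY PX) + of_real JY * q (bond N p2 PY PX) + of_real JY * q (bond N p3 PX PY) - of_real hX * q (onsite p3 PY) + of_real hY * q (onsite p3 PX) = 0"
    by (rule window_eq[of PI PI PZ]) (simp only: window_commutator_sum,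
      simp only: commutator_term_def bond_window_string string_mult_window_string string_phase_window_string, simp add: window_string_bond window_string_far_zero[OF L] algebra_simps)
qed

end

section \<open>The linear system of a conserved quantity\<close>

lemma period_two_parity:
  fixes f :: "nat \<Rightarrow> 'a"
  assumes "\<And>m. Suc (Suc m) < N \<Longrightarrow> f (Suc (Suc m)) = f m" and "i < N"
  shows "f i = (if even i then f 0 else f 1)"
  using assms(2)
proof (induction i rule: less_induct)
  case (less i)
  show ?case
  proof (cases "i < 2")
    case True
    then show ?thesis by (cases i) auto
  next
    case False
    then obtain m where m: "i = Suc (Suc m)" by (metis add_2_eq_Suc le_add_diff_inverse not_less)
    then show ?thesis using assms(1) less by simp
  qed
qed

text \<open>The linear relations, obtained from the window equations, between the coefficients of a
conserved quantity: x i, y i, u i, v i are those of X_i X_{i+1}, Y_i Y_{i+1}, X_i Y_{i+1},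
Y_i X_{i+1}, and ax i, ay i, az i those of X_i, Y_i, Z_i; jx, jy, hx, hy, hz are the couplings.\<close>

locale bond_system =
  fixes N :: nat and n :: "nat \<Rightarrow> nat"
    and jx jy hx hy hz :: complex and x y u v ax ay az :: "nat \<Rightarrow> complex"
  assumes N6: "6 \<le> N" and n_Suc_mod: "\<And>i. n i = Suc i mod N"
    and jx: "jx \<noteq> 0" and jy: "jy \<noteq> 0" and hxy: "hx \<noteq> 0 \<or> hy \<noteq> 0"
    and uv: "\<And>i. i < N \<Longrightarrow> u i + v (n i) = 0"
    and vu: "\<And>i. i < N \<Longrightarrow> v i + u (n i) = 0"
    and xy: "\<And>i. i < N \<Longrightarrow> jy * x i = jx * y (n i)"
    and yx: "\<And>i. i < N \<Longrightarrow> jy * x (n i) = jx * y i"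
    and hz_uv: "\<And>i. i < N \<Longrightarrow> hz * (u i + v i) = 0"
    and ay_n: "\<And>i. i < N \<Longrightarrow> jx * ay (n i) = hy * x i - hx * u i"
    and ay: "\<And>i. i < N \<Longrightarrow> jx * ay i = hy * x i - hx * v i"
    and ax_n: "\<And>i. i < N \<Longrightarrow> jy * ax (n i) = hx * y i - hy * v i"
    and ax: "\<And>i. i < N \<Longrightarrow> jy * ax i = hx * y i - hy * u i"
    and az: "\<And>i. i < N \<Longrightarrow> hy * az i = hz * ay i \<and> hx * az i = hz * ax i"
begin

lemma n_less: "i < N \<Longrightarrow> n i < N"
  using N6 by (simp add: n_Suc_mod)

lemma x_period_two: "i < N \<Longrightarrow> x (n (n i)) = x i"
proof -
  assume "i < N"
  then have "jy * x (n (n i)) = jy * x i" using xy[of i] yx[of "n i"] n_less[of i] by simp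
  then show ?thesis using jy by simp
qed

lemma x_parity: "i < N \<Longrightarrow> x i = (if even i then x 0 else x 1)"
proof (rule period_two_parity)
  fix m assume "Suc (Suc m) < N"
  then show "x (Suc (Suc m)) = x m" using x_period_two[of m] by (simp add: n_Suc_mod)
qed

lemma u_x_relation_hx: "i < N \<Longrightarrow> 2 * hx * u i = hy * (x i - x (n i))"
  using ay_n[of i] ay[of "n i"] uv[of i] n_less[of i] by algebra

lemma v_x_relation_hx: "i < N \<Longrightarrow> 2 * hx * v i = hy * (x i - x (n i))"
  using u_x_relation_hx[of "n i"] vu[of i] x_period_two[of i] n_less[of i] by algebra

lemma v_x_relation_hy: "i < N \<Longrightarrow> 2 * hy * jx * v i = - hx * jy * (x i - x (n i))"
  using ax_n[of i] ax[of "n i"] vu[of i] xy[of i] yx[of i] n_less[of i] by algebra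

lemma u_x_relation_hy: "i < N \<Longrightarrow> 2 * hy * jx * u i = - hx * jy * (x i - x (n i))"
  using v_x_relation_hy[of "n i"] uv[of i] x_period_two[of i] n_less[of i] by algebra

text \<open>Only at the special point can the XX coefficient alternate along the ring.\<close>

abbreviation special :: bool where
  "special \<equiv> even N \<and> hz = 0 \<and> jx * hy ^ 2 + jy * hx ^ 2 = 0"

lemma special_imp_fields_nonzero: "jx * hy ^ 2 + jy * hx ^ 2 = 0 \<Longrightarrow> hx \<noteq> 0 \<and> hy \<noteq> 0"
  using hxy jx jy by auto

lemma x_constant_unless_special:
  assumes "\<not> special"
  shows "x 1 = x 0"
proof -
  have n0: "n 0 = 1" using N6 by (simp add: n_Suc_mod)
  have u0: "2 * hx * u 0 = hy * (x 0 - x 1)" using u_x_relation_hx[of 0] N6 n0 by simp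
  have v0: "2 * hx * v 0 = hy * (x 0 - x 1)" using v_x_relation_hx[of 0] N6 n0 by simp
  have u0': "2 * hy * jx * u 0 = - hx * jy * (x 0 - x 1)" using u_x_relation_hy[of 0] N6 n0 by simp
  have K: "(jx * hy ^ 2 + jy * hx ^ 2) * (x 0 - x 1) = 0" using u0 u0' by algebra
  consider "jx * hy ^ 2 + jy * hx ^ 2 \<noteq> 0" | "jx * hy ^ 2 + jy * hx ^ 2 = 0" "hz \<noteq> 0"
    | "jx * hy ^ 2 + jy * hx ^ 2 = 0" "odd N"
    using assms by blast
  then show ?thesis
  proof cases
    case 1
    then show ?thesis using K by simp
  next
    case 2
    then have "hx \<noteq> 0" "hy \<noteq> 0" using special_imp_fields_nonzero by auto
    have "u 0 + v 0 = 0" using hz_uv[of 0] N6 2(2) by simp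
    moreover have "u 0 = v 0"
    proof -
      have "(2 * hx) * u 0 = (2 * hx) * v 0" using u0 v0 by simp
      then show ?thesis using \<open>hx \<noteq> 0\<close> by simp
    qed
    ultimately have "hy * (x 0 - x 1) = 0" using u0 by simp
    then show ?thesis using \<open>hy \<noteq> 0\<close> by simp
  next
    case 3
    have "x (N - 1) = x 0" using x_parity[of "N - 1"] N6 3(2) by simp
    moreover have "x (n (n (N - 1))) = x (N - 1)" using x_period_two[of "N - 1"] N6 by simp
    moreover have "n (N - 1) = 0" "n 0 = 1" using N6 by (simp_all add: n_Suc_mod)
    ultimately show ?thesis by simp
  qed
qed

lemma x_alternating:
  obtains \<beta> \<gamma> where "\<And>i. i < N \<Longrightarrow> x i = \<beta> * jx + \<gamma> * (-1) ^ (i + 1) * hx ^ 2"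
    "\<And>i. i < N \<Longrightarrow> x (n i) = \<beta> * jx - \<gamma> * (-1) ^ (i + 1) * hx ^ 2"
    "\<not> special \<Longrightarrow> \<gamma> = 0" "\<gamma> * (jx * hy ^ 2 + jy * hx ^ 2) = 0"
proof -
  define \<gamma> where "\<gamma> = (if special then (x 1 - x 0) / (2 * hx ^ 2) else 0)"
  define \<beta> where "\<beta> = (x 0 + x 1) / (2 * jx)"
  have \<gamma>0: "\<not> special \<Longrightarrow> \<gamma> = 0"
    unfolding \<gamma>_def by (rule if_not_P)
  have \<gamma>K: "\<gamma> * (jx * hy ^ 2 + jy * hx ^ 2) = 0"
    by (simp add: \<gamma>_def)
  have sign: "(-1::complex) ^ (i + 1) = (if even i then -1 else 1)" for i
    by simp
  have x: "x i = \<beta> * jx + \<gamma> * (-1) ^ (i + 1) * hx ^ 2" if "i < N" for i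
  proof (cases special)
    case True
    then have "hx \<noteq> 0" using special_imp_fields_nonzero by simp
    then show ?thesis
      using x_parity[OF that] True jx by (auto simp: \<gamma>_def \<beta>_def sign field_simps)
  next
    case False
    then show ?thesis
      using x_parity[OF that] x_constant_unless_special jx \<gamma>0 by (simp add: \<beta>_def field_simps)
  qed
  have "x (n i) = \<beta> * jx - \<gamma> * (-1) ^ (i + 1) * hx ^ 2" if "i < N" for i
  proof (cases special)
    case True
    then have "(-1::complex) ^ (n i + 1) = - ((-1) ^ (i + 1))"
      using alternating_sign_Suc_mod[OF _ that] by (simp add: n_Suc_mod)
    then show ?thesis using x[OF n_less[OF that]] by simp
  next
    case False
    then show ?thesis using x[OF n_less[OF that]] \<gamma>0 by simp
  qed
  with x show thesis using \<gamma>0 \<gamma>K by (rule that)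
qed

lemma coefficients_from_x:
  assumes i: "i < N" and x: "x i = \<beta> * jx + \<gamma> * \<sigma> * hx ^ 2"
    and x_n: "x (n i) = \<beta> * jx - \<gamma> * \<sigma> * hx ^ 2" and \<gamma>K: "\<gamma> * (jx * hy ^ 2 + jy * hx ^ 2) = 0"
  shows "y i = \<beta> * jy + \<gamma> * \<sigma> * hy ^ 2" "u i = \<gamma> * \<sigma> * hx * hy" "v i = \<gamma> * \<sigma> * hx * hy"
    "ax i = \<beta> * hx" "ay i = \<beta> * hy" "az i = \<beta> * hz"
proof -
  have dx: "x i - x (n i) = 2 * \<gamma> * \<sigma> * hx ^ 2"
    using x x_n by algebra
  have "hx * (u i - \<gamma> * \<sigma> * hx * hy) = 0" "jx * (hy * (u i - \<gamma> * \<sigma> * hx * hy)) = 0"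
    using u_x_relation_hx[OF i] u_x_relation_hy[OF i] dx \<gamma>K by algebra+
  then show u: "u i = \<gamma> * \<sigma> * hx * hy" using jx hxy by auto
  have "hx * (v i - \<gamma> * \<sigma> * hx * hy) = 0" "jx * (hy * (v i - \<gamma> * \<sigma> * hx * hy)) = 0"
    using v_x_relation_hx[OF i] v_x_relation_hy[OF i] dx \<gamma>K by algebra+
  then show v: "v i = \<gamma> * \<sigma> * hx * hy" using jx hxy by auto
  have "jx * y i = jx * (\<beta> * jy + \<gamma> * \<sigma> * hy ^ 2)"
    using yx[OF i] x_n \<gamma>K by algebra
  then show y: "y i = \<beta> * jy + \<gamma> * \<sigma> * hy ^ 2" using jx by simp
  have "jx * ay i = jx * (\<beta> * hy)" using ay[OF i] x v by algebra
  then show ay': "ay i = \<beta> * hy" using jx by simp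
  have "jy * ax i = jy * (\<beta> * hx)" using ax[OF i] y u by algebra
  then show ax': "ax i = \<beta> * hx" using jy by simp
  have "hy * (az i - \<beta> * hz) = 0" "hx * (az i - \<beta> * hz) = 0"
    using az[OF i] ay' ax' by algebra+
  then show "az i = \<beta> * hz" using hxy by auto
qed

lemma bond_system_solution:
  obtains \<beta> \<gamma> where "\<And>i. i < N \<Longrightarrow> x i = \<beta> * jx + \<gamma> * (-1) ^ (i + 1) * hx ^ 2"
    "\<And>i. i < N \<Longrightarrow> y i = \<beta> * jy + \<gamma> * (-1) ^ (i + 1) * hy ^ 2"
    "\<And>i. i < N \<Longrightarrow> u i = \<gamma> * (-1) ^ (i + 1) * hx * hy"
    "\<And>i. i < N \<Longrightarrow> v i = \<gamma> * (-1) ^ (i + 1) * hx * hy"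
    "\<And>i. i < N \<Longrightarrow> ax i = \<beta> * hx" "\<And>i. i < N \<Longrightarrow> ay i = \<beta> * hy" "\<And>i. i < N \<Longrightarrow> az i = \<beta> * hz"
    "\<not> special \<Longrightarrow> \<gamma> = 0"
proof -
  obtain \<beta> \<gamma> where x: "\<And>i. i < N \<Longrightarrow> x i = \<beta> * jx + \<gamma> * (-1) ^ (i + 1) * hx ^ 2"
    and x_n: "\<And>i. i < N \<Longrightarrow> x (n i) = \<beta> * jx - \<gamma> * (-1) ^ (i + 1) * hx ^ 2"
    and \<gamma>: "\<not> special \<Longrightarrow> \<gamma> = 0" and \<gamma>K: "\<gamma> * (jx * hy ^ 2 + jy * hx ^ 2) = 0"
    using x_alternating by blast
  note coefs = coefficients_from_x[OF _ x x_n \<gamma>K]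
  show thesis
    by (rule that[of \<beta> \<gamma>]) (use x coefs \<gamma> in simp_all)
qed

end

lemma ring_window_at:
  assumes "6 \<le> N" "j < N"
  obtains p where "ring_window N p" "ring_window.p1 N p = j"
    "ring_window.p2 N p = Suc j mod N" "ring_window.p3 N p = Suc (Suc j mod N) mod N"
proof -
  obtain p where p: "p < N" "Suc p mod N = j" using Suc_mod_surj[OF assms(2)] by blast
  then interpret W: ring_window N p using assms(1) by unfold_locales
  have "W.p1 = j" using p(2) unfolding W.p1_def .
  then show thesis using that[of p] W.ring_window_axioms by (simp add: W.p2_def W.p3_def)
qed

definition special_point :: "nat \<Rightarrow> real \<Rightarrow> real \<Rightarrow> real \<Rightarrow> real \<Rightarrow> real \<Rightarrow> bool" where
  "special_point N JX JY hX hY hZ \<longleftrightarrow> even N \<and> hZ = 0 \<and> hX \<noteq> 0 \<and> hY \<noteq> 0 \<and> JY = - JX * (hY / hX) ^ 2"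

context
  fixes N :: nat and JX JY hX hY hZ :: real and q :: "(nat \<Rightarrow> pauli) \<Rightarrow> complex"
  assumes N6: "6 \<le> N" and JX: "JX \<noteq> 0" and JY: "JY \<noteq> 0"
    and L: "bond_local N q" and H: "\<forall>u. (\<Sum>i<N. commutator_term N JX JY hX hY hZ q u i) = 0"
begin

lemma commutant_bond_Z_zero:
  assumes "i < N"
  shows "q (bond N i PX PZ) = 0" "q (bond N i PY PZ) = 0" "q (bond N i PZ PZ) = 0"
    "q (bond N i PZ PX) = 0" "q (bond N i PZ PY) = 0"
proof -
  obtain p where W: "ring_window N p" "ring_window.p1 N p = i"
    using ring_window_at[OF N6 assms] by blast
  show "q (bond N i PX PZ) = 0" "q (bond N i PY PZ) = 0" "q (bond N i PZ PZ) = 0"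
    "q (bond N i PZ PX) = 0" "q (bond N i PZ PY) = 0"
    using ring_window.XXY[OF W(1) L H] ring_window.YYX[OF W(1) L H] ring_window.ZXY[OF W(1) L H]
      ring_window.ZZX[OF W(1) L H] ring_window.ZZY[OF W(1) L H] JX JY
    unfolding W(2) by simp_all
qed

lemma commutant_bond_system:
  assumes hXY: "(hX, hY) \<noteq> (0, 0)"
  shows "bond_system N (\<lambda>i. Suc i mod N) (of_real JX) (of_real JY) (of_real hX) (of_real hY) (of_real hZ)
     (\<lambda>i. q (bond N i PX PX)) (\<lambda>i. q (bond N i PY PY)) (\<lambda>i. q (bond N i PX PY)) (\<lambda>i. q (bond N i PY PX))
     (\<lambda>i. q (onsite i PX)) (\<lambda>i. q (onsite i PY)) (\<lambda>i. q (onsite i PZ))"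
proof
  note Z = commutant_bond_Z_zero
  fix i assume i: "i < N"
  obtain p where W: "ring_window N p" "ring_window.p1 N p = i" "ring_window.p2 N p = Suc i mod N"
    using ring_window_at[OF N6 i] by blast
  note e1 = ring_window.XZX[OF W(1) L H] ring_window.YZY[OF W(1) L H]
    ring_window.XZY[OF W(1) L H] ring_window.YZX[OF W(1) L H]
  have "of_real JX * (q (bond N i PX PY) + q (bond N (Suc i mod N) PY PX)) = 0"
    using e1(1) unfolding W(2,3) by algebra
  then show "q (bond N i PX PY) + q (bond N (Suc i mod N) PY PX) = 0" using JX by simp
  have "of_real JY * (q (bond N i PY PX) + q (bond N (Suc i mod N) PX PY)) = 0"
    using e1(2) unfolding W(2,3) by (simp add: algebra_simps)
  then show "q (bond N i PY PX) + q (bond N (Suc i mod N) PX PY) = 0" using JY by simp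
  show "of_real JY * q (bond N i PX PX) = of_real JX * q (bond N (Suc i mod N) PY PY)"
    using e1(3) unfolding W(2,3) by (simp add: algebra_simps)
  show "of_real JY * q (bond N (Suc i mod N) PX PX) = of_real JX * q (bond N i PY PY)"
    using e1(4) unfolding W(2,3) by (simp add: algebra_simps)
  obtain j where j: "j < N" "Suc j mod N = i" using Suc_mod_surj[OF i] by blast
  obtain p' where W': "ring_window N p'" "ring_window.p2 N p' = i" "ring_window.p3 N p' = Suc i mod N"
    using ring_window_at[OF N6 j(1)] unfolding j(2) by blast
  note e2 = ring_window.IXX[OF W'(1) L H] ring_window.IXZ[OF W'(1) L H] ring_window.IZX[OF W'(1) L H]
    ring_window.IYZ[OF W'(1) L H] ring_window.IZY[OF W'(1) L H]
  show "of_real hZ * (q (bond N i PX PY) + q (bond N i PY PX)) = 0"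
    using e2(1) Z[OF i] unfolding W'(2,3) by (simp add: algebra_simps)
  show "of_real JX * q (onsite (Suc i mod N) PY) = of_real hY * q (bond N i PX PX) - of_real hX * q (bond N i PX PY)"
    using e2(2) Z[OF i] unfolding W'(2,3) by (simp add: algebra_simps)
  show "of_real JX * q (onsite i PY) = of_real hY * q (bond N i PX PX) - of_real hX * q (bond N i PY PX)"
    using e2(3) Z[OF i] unfolding W'(2,3) by (simp add: algebra_simps)
  show "of_real JY * q (onsite (Suc i mod N) PX) = of_real hX * q (bond N i PY PY) - of_real hY * q (bond N i PY PX)"
    using e2(4) Z[OF i] unfolding W'(2,3) by (simp add: algebra_simps)
  show "of_real JY * q (onsite i PX) = of_real hX * q (bond N i PY PY) - of_real hY * q (bond N i PX PY)"
    using e2(5) Z[OF i] unfolding W'(2,3) by (simp add: algebra_simps)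
  obtain k where k: "k < N" "Suc k mod N = j" using Suc_mod_surj[OF j(1)] by blast
  obtain p'' where W'': "ring_window N p''" "ring_window.p2 N p'' = j" "ring_window.p3 N p'' = i"
    using ring_window_at[OF N6 k(1)] unfolding k(2) j(2) by blast
  show "of_real hY * q (onsite i PZ) = of_real hZ * q (onsite i PY) \<and>
        of_real hX * q (onsite i PZ) = of_real hZ * q (onsite i PX)"
    using ring_window.IIX[OF W''(1) L H] ring_window.IIY[OF W''(1) L H] Z[OF i] Z[OF j(1)]
    unfolding W''(2,3) by (simp add: algebra_simps)
qed (use N6 JX JY hXY in auto)

lemma commutant_coefficients:
  assumes hXY: "(hX, hY) \<noteq> (0, 0)"
  obtains \<beta> \<gamma> where
    "\<And>i. i < N \<Longrightarrow> q (bond N i PX PX) = \<beta> * of_real JX + \<gamma> * (-1) ^ (i + 1) * of_real hX ^ 2"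
    "\<And>i. i < N \<Longrightarrow> q (bond N i PY PY) = \<beta> * of_real JY + \<gamma> * (-1) ^ (i + 1) * of_real hY ^ 2"
    "\<And>i. i < N \<Longrightarrow> q (bond N i PX PY) = \<gamma> * (-1) ^ (i + 1) * of_real hX * of_real hY"
    "\<And>i. i < N \<Longrightarrow> q (bond N i PY PX) = \<gamma> * (-1) ^ (i + 1) * of_real hX * of_real hY"
    "\<And>i. i < N \<Longrightarrow> q (onsite i PX) = \<beta> * of_real hX"
    "\<And>i. i < N \<Longrightarrow> q (onsite i PY) = \<beta> * of_real hY"
    "\<And>i. i < N \<Longrightarrow> q (onsite i PZ) = \<beta> * of_real hZ"
    "\<not> special_point N JX JY hX hY hZ \<Longrightarrow> \<gamma> = 0"
proof -
  interpret S: bond_system N "\<lambda>i. Suc i mod N" "of_real JX" "of_real JY" "of_real hX" "of_real hY"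
    "of_real hZ" "\<lambda>i. q (bond N i PX PX)" "\<lambda>i. q (bond N i PY PY)" "\<lambda>i. q (bond N i PX PY)"
    "\<lambda>i. q (bond N i PY PX)" "\<lambda>i. q (onsite i PX)" "\<lambda>i. q (onsite i PY)" "\<lambda>i. q (onsite i PZ)"
    by (rule commutant_bond_system[OF hXY])
  have special: "special_point N JX JY hX hY hZ \<longleftrightarrow> S.special"
  proof -
    have "JX * hY ^ 2 + JY * hX ^ 2 = 0 \<Longrightarrow> hX \<noteq> 0 \<and> hY \<noteq> 0"
      using JX JY hXY by auto
    moreover have "hX \<noteq> 0 \<Longrightarrow> JY = - JX * (hY / hX) ^ 2 \<longleftrightarrow> JX * hY ^ 2 + JY * hX ^ 2 = 0"
      by (auto simp: field_simps power2_eq_square)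
    moreover have "of_real JX * of_real hY ^ 2 + of_real JY * of_real hX ^ 2
        = (of_real (JX * hY ^ 2 + JY * hX ^ 2) :: complex)" by simp
    ultimately show ?thesis unfolding special_point_def by (auto simp del: of_real_add)
  qed
  show thesis
    by (rule S.bond_system_solution, rule that) (assumption | use special in blast)+
qed

end

section \<open>Q0 is conserved at the special point\<close>

definition run3_supported :: "nat \<Rightarrow> (nat \<Rightarrow> pauli) \<Rightarrow> bool" where
  "run3_supported N w \<longleftrightarrow>
     (\<exists>b<N. \<forall>r<N. w r \<noteq> PI \<longrightarrow> r = b \<or> r = Suc b mod N \<or> r = Suc (Suc b mod N) mod N)"

text \<open>If a bond string t fails to commute with w while t w has a nonzero bond-local coefficient,
then w shares a site with both bonds, so w lives on three consecutive sites.\<close>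

lemma noncommuting_bond_local_run3:
  fixes q :: "(nat \<Rightarrow> pauli) \<Rightarrow> complex"
  assumes N: "0 < N" and L: "bond_local N q" and i: "i < N"
    and t: "\<forall>r<N. t r \<noteq> PI \<longrightarrow> r = i \<or> r = Suc i mod N"
    and ne: "string_phase N t w \<noteq> string_phase N w t" and nz: "q (string_mult w t) \<noteq> 0"
  shows "run3_supported N w"
proof -
  obtain k where k: "k < N" "\<forall>r<N. string_mult w t r \<noteq> PI \<longrightarrow> r = k \<or> r = Suc k mod N"
    using L nz unfolding bond_local_def bond_supported_def by blast
  obtain m where m: "m < N" "pauli_phase (t m) (w m) \<noteq> pauli_phase (w m) (t m)"
    using ne unfolding string_phase_def by (metis (mono_tags, lifting) lessThan_iff prod.cong)
  have tm: "t m \<noteq> PI" "w m \<noteq> PI" "t m \<noteq> w m" using pauli_phase_asym_imp[OF m(2)] by auto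
  then have "string_mult w t m \<noteq> PI" by (simp add: string_mult_def pauli_mult_eq_PI_iff)
  then have mk: "m = k \<or> m = Suc k mod N" using k m(1) by blast
  have mi: "m = i \<or> m = Suc i mod N" using t tm m(1) by blast
  have wr: "r = k \<or> r = Suc k mod N \<or> r = i \<or> r = Suc i mod N" if "r < N" "w r \<noteq> PI" for r
  proof (cases "t r = PI")
    case True
    then have "string_mult w t r \<noteq> PI" using that by (simp add: string_mult_def)
    then show ?thesis using k that by blast
  next
    case False then show ?thesis using t that by blast
  qed
  have "Suc k mod N < N" "Suc i mod N < N" using N by auto
  consider "m = k" | "m = Suc k mod N" "m = i" | "m = Suc k mod N" "m = Suc i mod N"
    using mk mi by blast
  then show ?thesis
  proof cases
    case 1
    then show ?thesis unfolding run3_supported_def using wr i mi by (intro exI[of _ i]) auto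
  next
    case 2
    then show ?thesis unfolding run3_supported_def using wr k(1) by (intro exI[of _ k]) auto
  next
    case 3
    then have "k = i" using Suc_mod_inj[of k N i] k(1) i by simp
    then show ?thesis unfolding run3_supported_def using wr i 3 by (intro exI[of _ i]) auto
  qed
qed

lemma commutator_terms_zero_off_run3:
  fixes q :: "(nat \<Rightarrow> pauli) \<Rightarrow> complex"
  assumes N: "0 < N" and L: "bond_local N q" and w: "\<not> run3_supported N w" and i: "i < N"
  shows "commutator_term N JX JY hX hY hZ q w i = 0"
proof -
  have z: "(string_phase N t w - string_phase N w t) * q (string_mult w t) = 0"
    if "\<forall>r<N. t r \<noteq> PI \<longrightarrow> r = i \<or> r = Suc i mod N" for t
    using noncommuting_bond_local_run3[OF N L i that] w by fastforce
  have bond: "\<forall>r<N. bond N i A B r \<noteq> PI \<longrightarrow> r = i \<or> r = Suc i mod N" for A B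
    by (auto simp: bond_def)
  have onsite: "\<forall>r<N. onsite i A r \<noteq> PI \<longrightarrow> r = i \<or> r = Suc i mod N" for A
    by (auto simp: onsite_def)
  show ?thesis
    unfolding commutator_term_def
    by (simp only: mult.assoc z[OF bond] z[OF onsite] mult_zero_right add_0_right)
qed

lemma commutator_terms_zero_from_windows:
  fixes q :: "(nat \<Rightarrow> pauli) \<Rightarrow> complex"
  assumes N6: "6 \<le> N" and L: "bond_local N q" and R: "\<And>z z'. \<forall>r<N. z r = z' r \<Longrightarrow> q z = q z'"
    and W: "\<And>p A D C. p < N \<Longrightarrow>
      (\<Sum>i<N. commutator_term N JX JY hX hY hZ q (ring_window.window_string N p PI A D C PI) i) = 0"
  shows "(\<Sum>i<N. commutator_term N JX JY hX hY hZ q w i) = 0"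
proof (cases "run3_supported N w")
  case True
  then obtain b where b: "b < N" "\<forall>r<N. w r \<noteq> PI \<longrightarrow> r = b \<or> r = Suc b mod N \<or> r = Suc (Suc b mod N) mod N"
    unfolding run3_supported_def by blast
  obtain p where p: "ring_window N p" "ring_window.p1 N p = b"
    "ring_window.p2 N p = Suc b mod N" "ring_window.p3 N p = Suc (Suc b mod N) mod N"
    using ring_window_at[OF N6 b(1)] by blast
  interpret W: ring_window N p by (rule p(1))
  define w' where "w' = W.window_string PI (w W.p1) (w W.p2) (w W.p3) PI"
  have eq: "\<forall>r<N. w' r = w r"
  proof (intro allI impI)
    fix r assume r: "r < N"
    show "w' r = w r"
    proof (cases "r = W.p1 \<or> r = W.p2 \<or> r = W.p3")
      case True then show ?thesis unfolding w'_def W.window_string_apply by auto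
    next
      case False
      then have "w r = PI" using b(2) r unfolding p(2-4) by auto
      then show ?thesis using False unfolding w'_def W.window_string_apply by auto
    qed
  qed
  have mult_eq: "\<forall>r<N. string_mult w' t r = string_mult w t r" for t
    using eq by (simp add: string_mult_def)
  have "commutator_term N JX JY hX hY hZ q w' i = commutator_term N JX JY hX hY hZ q w i" for i
    unfolding commutator_term_def using string_phase_cong[OF eq] R[OF mult_eq] by simp
  then have "(\<Sum>i<N. commutator_term N JX JY hX hY hZ q w i) = (\<Sum>i<N. commutator_term N JX JY hX hY hZ q w' i)"
    by simp
  also have "\<dots> = 0" unfolding w'_def by (rule W[OF W.p_less])
  finally show ?thesis .
next
  case False
  then show ?thesis
    using commutator_terms_zero_off_run3[OF _ L] N6 by (intro sum.neutral) auto
qed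

fun field_coef :: "real \<Rightarrow> real \<Rightarrow> pauli \<Rightarrow> complex" where
  "field_coef hX hY PX = of_real hX" | "field_coef hX hY PY = of_real hY"
| "field_coef hX hY PZ = 0" | "field_coef hX hY PI = 0"

lemma pcoef_Q0_bond_field_coef:
  assumes "2 < N" "j < N" "A \<noteq> PI" "B \<noteq> PI"
  shows "pcoef N (bond N j A B) (Q0 N hX hY) = (-1) ^ (j + 1) * field_coef hX hY A * field_coef hX hY B"
  unfolding pcoef_Q0_bond[OF assms] using assms by (cases A; cases B) auto

context ring_window
begin

text \<open>The heart of part (a): the alternating bond coefficients (-1)^k of
(hX X + hY Y) (hX X + hY Y) cancel in every window once hZ = 0 and JY hX^2 = - JX hY^2.\<close>

lemma alternating_field_pairs_window_zero:
  fixes q :: "(nat \<Rightarrow> pauli) \<Rightarrow> complex" and c :: complex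
  assumes L: "bond_local N q"
   and q0: "\<And>A B. A \<noteq> PI \<Longrightarrow> B \<noteq> PI \<Longrightarrow> q (bond N p A B) = c * field_coef hX hY A * field_coef hX hY B"
   and q1: "\<And>A B. A \<noteq> PI \<Longrightarrow> B \<noteq> PI \<Longrightarrow> q (bond N p1 A B) = - c * field_coef hX hY A * field_coef hX hY B"
   and q2: "\<And>A B. A \<noteq> PI \<Longrightarrow> B \<noteq> PI \<Longrightarrow> q (bond N p2 A B) = c * field_coef hX hY A * field_coef hX hY B"
   and q3: "\<And>A B. A \<noteq> PI \<Longrightarrow> B \<noteq> PI \<Longrightarrow> q (bond N p3 A B) = - c * field_coef hX hY A * field_coef hX hY B"
   and q_onsite: "\<And>j A. j < N \<Longrightarrow> A \<noteq> PI \<Longrightarrow> q (onsite j A) = 0" and q_id: "q (\<lambda>_. PI) = 0"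
   and hZ: "hZ = 0" and hX: "hX \<noteq> 0"
   and JY: "complex_of_real JY = - complex_of_real JX * complex_of_real hY ^ 2 / complex_of_real hX ^ 2"
  shows "(\<Sum>i<N. commutator_term N JX JY hX hY hZ q (window_string PI A D C PI) i) = 0"
  apply (simp only: window_commutator_sum)
  apply (simp only: commutator_term_def bond_window_string string_mult_window_string string_phase_window_string)
  apply (cases A; cases D; cases C)
  apply (simp_all add: window_string_bond window_string_far_zero[OF L] N6 q0 q1 q2 q3 q_onsite q_id hZ)
  using hX apply (simp_all add: JY field_simps)
  apply (simp_all add: power2_eq_square mult_ac)
  done

end

lemma bond_local_Q0: "1 < N \<Longrightarrow> bond_local N (\<lambda>w. pcoef N w (Q0 N hX hY))"
  unfolding bond_local_def using pcoef_Q0_not_bond_supported by blast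

lemma (in ring_window) Q0_window_commutator_zero:
  assumes special: "special_point N JX JY hX hY hZ"
  shows "(\<Sum>i<N. commutator_term N JX JY hX hY hZ (\<lambda>w. pcoef N w (Q0 N hX hY))
            (window_string PI A D C PI) i) = 0"
proof -
  have ev: "even N" and hZ: "hZ = 0" and hX: "hX \<noteq> 0" and JY: "JY = - JX * (hY / hX) ^ 2"
    using special unfolding special_point_def by auto
  have N: "1 < N" "2 < N" using N6 by auto
  have q_bond: "pcoef N (bond N k A B) (Q0 N hX hY) = (-1) ^ (k + 1) * field_coef hX hY A * field_coef hX hY B"
    if "k < N" "A \<noteq> PI" "B \<noteq> PI" for k A B
    using pcoef_Q0_bond_field_coef[OF N(2) that] .
  have sign1: "(-1::complex) ^ (p1 + 1) = - ((-1) ^ (p + 1))"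
    using alternating_sign_Suc_mod[OF ev p_less] by (simp only: window_Suc)
  have "(-1::complex) ^ (p2 + 1) = - ((-1) ^ (p1 + 1))"
    using alternating_sign_Suc_mod[OF ev window_sites_less(2)] by (simp only: window_Suc)
  then have sign2: "(-1::complex) ^ (p2 + 1) = (-1) ^ (p + 1)"
    unfolding sign1 minus_minus .
  have "(-1::complex) ^ (p3 + 1) = - ((-1) ^ (p2 + 1))"
    using alternating_sign_Suc_mod[OF ev window_sites_less(3)] by (simp only: window_Suc)
  then have sign3: "(-1::complex) ^ (p3 + 1) = - ((-1) ^ (p + 1))"
    unfolding sign2 .
  show ?thesis
  proof (rule alternating_field_pairs_window_zero[OF bond_local_Q0[OF N(1)], where c = "(-1) ^ (p + 1)"])
    show "pcoef N (bond N p A B) (Q0 N hX hY) = (-1) ^ (p + 1) * field_coef hX hY A * field_coef hX hY B"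
      if "A \<noteq> PI" "B \<noteq> PI" for A B
      using q_bond[OF p_less that] .
    show "pcoef N (bond N p1 A B) (Q0 N hX hY) = - ((-1) ^ (p + 1)) * field_coef hX hY A * field_coef hX hY B"
      if "A \<noteq> PI" "B \<noteq> PI" for A B
      unfolding q_bond[OF window_sites_less(2) that] sign1 ..
    show "pcoef N (bond N p2 A B) (Q0 N hX hY) = (-1) ^ (p + 1) * field_coef hX hY A * field_coef hX hY B"
      if "A \<noteq> PI" "B \<noteq> PI" for A B
      unfolding q_bond[OF window_sites_less(3) that] sign2 ..
    show "pcoef N (bond N p3 A B) (Q0 N hX hY) = - ((-1) ^ (p + 1)) * field_coef hX hY A * field_coef hX hY B"
      if "A \<noteq> PI" "B \<noteq> PI" for A B
      unfolding q_bond[OF window_sites_less(4) that] sign3 ..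
  qed (use N hZ hX JY in \<open>simp_all add: pcoef_Q0_onsite pcoef_Q0_identity power_divide\<close>)
qed

theorem Q0_commutes_ham:
  assumes N6: "6 \<le> N" and special: "special_point N JX JY hX hY hZ"
  shows "commutes N (Q0 N hX hY) (ham N JX JY hX hY hZ)"
proof -
  have N: "1 < N" using N6 by simp
  have R: "pcoef N z (Q0 N hX hY) = pcoef N z' (Q0 N hX hY)" if "\<forall>r<N. z r = z' r" for z z'
    unfolding pcoef_def pstring_cong[OF that] ..
  have window: "(\<Sum>i<N. commutator_term N JX JY hX hY hZ (\<lambda>w. pcoef N w (Q0 N hX hY))
      (ring_window.window_string N p PI A D C PI) i) = 0" if "p < N" for p A D C
    by (rule ring_window.Q0_window_commutator_zero[OF ring_window.intro[OF N6 that] special])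
  define D where "D = (\<lambda>a b. mmul N (Q0 N hX hY) (ham N JX JY hX hY hZ) a b
                            - mmul N (ham N JX JY hX hY hZ) (Q0 N hX hY) a b)"
  have "pauli_span N D"
    unfolding D_def by (intro pauli_span_diff pauli_span_mmul pauli_span_Q0 pauli_span_ham N)
  moreover have "pcoef N w D = 0" for w
    using commutator_terms_zero_from_windows[OF N6 bond_local_Q0[OF N] R window]
    unfolding D_def pcoef_diff pcoef_commutator[symmetric] .
  ultimately have "D = (\<lambda>a b. 0)" by (rule pauli_span_eq_zero)
  then have "D a b = 0" for a b by simp
  then show ?thesis unfolding commutes_def D_def by (intro ext) simp
qed

section \<open>Classification of conserved quantities\<close>

lemma pauli_span_eq_by_bond_coefs:
  assumes N: "1 < N" and A: "pauli_span N A" "bond_local N (\<lambda>w. pcoef N w A)"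
    and B: "pauli_span N B" "bond_local N (\<lambda>w. pcoef N w B)"
    and identity: "pcoef N (\<lambda>_. PI) A = pcoef N (\<lambda>_. PI) B"
    and onsite: "\<And>i P. i < N \<Longrightarrow> P \<noteq> PI \<Longrightarrow> pcoef N (onsite i P) A = pcoef N (onsite i P) B"
    and bond: "\<And>i P P'. i < N \<Longrightarrow> P \<noteq> PI \<Longrightarrow> P' \<noteq> PI \<Longrightarrow>
      pcoef N (bond N i P P') A = pcoef N (bond N i P P') B"
  shows "A = B"
proof -
  have "(\<lambda>a b. A a b - B a b) = (\<lambda>a b. 0)"
  proof (rule pauli_span_eq_zero)
    show "pauli_span N (\<lambda>a b. A a b - B a b)" using A(1) B(1) by (rule pauli_span_diff)
    fix w assume w: "ring_string N w"
    show "pcoef N w (\<lambda>a b. A a b - B a b) = 0"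
    proof (cases "bond_supported N w")
      case True
      from bond_supported_cases[OF w True N] show ?thesis
      proof cases
        case 1
        then show ?thesis using identity by (simp add: pcoef_diff)
      next
        case (2 i P)
        then show ?thesis using onsite by (simp add: pcoef_diff)
      next
        case (3 i P P')
        then show ?thesis using bond by (simp add: pcoef_diff)
      qed
    next
      case False
      then have "pcoef N w A = 0" "pcoef N w B = 0" using A(2) B(2) unfolding bond_local_def by blast+
      then show ?thesis by (simp add: pcoef_diff)
    qed
  qed
  then have "A a b - B a b = 0" for a b by metis
  then show ?thesis by (intro ext) simp
qed

lemma bond_local_combination:
  assumes "1 < N"
  shows "bond_local N (\<lambda>w. pcoef N w (\<lambda>a b. \<alpha> * idop N a b + \<beta> * ham N JX JY hX hY hZ a b
                                          + \<gamma> * Q0 N hX hY a b))"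
proof -
  have idop: "pcoef N w (idop N) = 0" if "\<not> bond_supported N w" for w
  proof -
    have "bond_supported N (\<lambda>_. PI)" unfolding bond_supported_def using assms by auto
    then show ?thesis using that bond_supported_cong[of N "\<lambda>_. PI" w] by (auto simp: pcoef_idop)
  qed
  show ?thesis
    unfolding bond_local_def
  proof (intro allI impI)
    fix w
    assume nz: "pcoef N w (\<lambda>a b. \<alpha> * idop N a b + \<beta> * ham N JX JY hX hY hZ a b + \<gamma> * Q0 N hX hY a b) \<noteq> 0"
    show "bond_supported N w"
    proof (rule ccontr)
      assume ns: "\<not> bond_supported N w"
      have "pcoef N w (\<lambda>a b. \<alpha> * idop N a b + \<beta> * ham N JX JY hX hY hZ a b + \<gamma> * Q0 N hX hY a b) = 0"
        using idop[OF ns] pcoef_ham_not_bond_supported[OF ns] pcoef_Q0_not_bond_supported[OF assms ns]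
        by (simp add: pcoef_add pcoef_cmult)
      with nz show False by contradiction
    qed
  qed
qed

theorem commutant_decomposition:
  assumes N6: "6 \<le> N" and JX: "JX \<noteq> 0" and JY: "JY \<noteq> 0" and hXY: "(hX, hY) \<noteq> (0, 0)"
    and Q: "local_op 2 N Q" and com: "commutes N Q (ham N JX JY hX hY hZ)"
  obtains \<alpha> \<beta> \<gamma> where
    "Q = (\<lambda>a b. \<alpha> * idop N a b + \<beta> * ham N JX JY hX hY hZ a b + \<gamma> * Q0 N hX hY a b)"
    "\<not> special_point N JX JY hX hY hZ \<Longrightarrow> \<gamma> = 0"
    "\<And>i. i < N \<Longrightarrow> pcoef N (bond N i PX PX) Q = \<beta> * of_real JX + \<gamma> * (-1) ^ (i + 1) * of_real hX ^ 2"
    "\<And>i. i < N \<Longrightarrow> pcoef N (bond N i PY PY) Q = \<beta> * of_real JY + \<gamma> * (-1) ^ (i + 1) * of_real hY ^ 2"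
proof -
  have N: "1 < N" "2 < N" using N6 by auto
  have L: "bond_local N (\<lambda>w. pcoef N w Q)"
    using local_op_2_bond_local[OF Q] N6 by simp
  note H = commutes_imp_commutator_terms_zero[OF com]
  obtain \<beta> \<gamma> where
    xx: "\<And>i. i < N \<Longrightarrow> pcoef N (bond N i PX PX) Q = \<beta> * of_real JX + \<gamma> * (-1) ^ (i + 1) * of_real hX ^ 2"
    and yy: "\<And>i. i < N \<Longrightarrow> pcoef N (bond N i PY PY) Q = \<beta> * of_real JY + \<gamma> * (-1) ^ (i + 1) * of_real hY ^ 2"
    and xy: "\<And>i. i < N \<Longrightarrow> pcoef N (bond N i PX PY) Q = \<gamma> * (-1) ^ (i + 1) * of_real hX * of_real hY"
    and yx: "\<And>i. i < N \<Longrightarrow> pcoef N (bond N i PY PX) Q = \<gamma> * (-1) ^ (i + 1) * of_real hX * of_real hY"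
    and x: "\<And>i. i < N \<Longrightarrow> pcoef N (onsite i PX) Q = \<beta> * of_real hX"
    and y: "\<And>i. i < N \<Longrightarrow> pcoef N (onsite i PY) Q = \<beta> * of_real hY"
    and z: "\<And>i. i < N \<Longrightarrow> pcoef N (onsite i PZ) Q = \<beta> * of_real hZ"
    and \<gamma>: "\<not> special_point N JX JY hX hY hZ \<Longrightarrow> \<gamma> = 0"
    using commutant_coefficients[OF N6 JX JY L H hXY] by blast
  note Z = commutant_bond_Z_zero[OF N6 JX JY L H]
  define \<alpha> where "\<alpha> = pcoef N (\<lambda>_. PI) Q"
  have "Q = (\<lambda>a b. \<alpha> * idop N a b + \<beta> * ham N JX JY hX hY hZ a b + \<gamma> * Q0 N hX hY a b)"
  proof (rule pauli_span_eq_by_bond_coefs[OF N(1) local_op_pauli_span[OF Q] L _ bond_local_combination[OF N(1)]])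
    show "pauli_span N (\<lambda>a b. \<alpha> * idop N a b + \<beta> * ham N JX JY hX hY hZ a b + \<gamma> * Q0 N hX hY a b)"
      by (intro pauli_span_add pauli_span_cmult pauli_span_idop pauli_span_ham pauli_span_Q0 N)
    show "pcoef N (\<lambda>_. PI) Q = pcoef N (\<lambda>_. PI)
        (\<lambda>a b. \<alpha> * idop N a b + \<beta> * ham N JX JY hX hY hZ a b + \<gamma> * Q0 N hX hY a b)"
      using pcoef_ham_identity[OF N(2)] pcoef_Q0_identity[OF N(1)]
      by (simp add: pcoef_add pcoef_cmult pcoef_idop \<alpha>_def)
    fix i P P' assume i: "i < N" and P: "P \<noteq> PI" and P': "P' \<noteq> PI"
    have "\<not> (\<forall>k<N. onsite i P k = PI)" using onsite_neq_identity[OF i P] by metis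
    then show "pcoef N (onsite i P) Q = pcoef N (onsite i P)
        (\<lambda>a b. \<alpha> * idop N a b + \<beta> * ham N JX JY hX hY hZ a b + \<gamma> * Q0 N hX hY a b)"
      unfolding pcoef_add pcoef_cmult pcoef_idop pcoef_ham_onsite[OF N(2) i P] pcoef_Q0_onsite[OF N(1) i P]
      using x[OF i] y[OF i] z[OF i] P by (cases P) auto
    have "\<not> (\<forall>k<N. bond N i P P' k = PI)" using bond_neq_identity[OF N(1) i P] by metis
    then show "pcoef N (bond N i P P') Q = pcoef N (bond N i P P')
        (\<lambda>a b. \<alpha> * idop N a b + \<beta> * ham N JX JY hX hY hZ a b + \<gamma> * Q0 N hX hY a b)"
      unfolding pcoef_add pcoef_cmult pcoef_idop pcoef_ham_bond[OF N(2) i P P'] pcoef_Q0_bond[OF N(2) i P P']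
      using xx[OF i] yy[OF i] xy[OF i] yx[OF i] Z[OF i] P P'
      by (cases P; cases P') (auto simp: algebra_simps power2_eq_square)
  qed
  from this \<gamma> xx yy show thesis by (rule that)
qed

lemma local_op_1_bond_coef_zero:
  assumes N: "1 < N" and Q: "local_op 1 N Q" and i: "i < N" and A: "A \<noteq> PI" and B: "B \<noteq> PI"
  shows "pcoef N (bond N i A B) Q = 0"
proof (rule ccontr)
  assume nz: "pcoef N (bond N i A B) Q \<noteq> 0"
  obtain S c where S: "\<forall>s\<in>S. (\<forall>i\<ge>N. s i = PI) \<and> support N s \<le> 1"
     "Q = (\<lambda>a b. \<Sum>s\<in>S. c s * pstring N s a b)"
    using Q unfolding local_op_def by blast
  obtain s where s: "s \<in> S" "\<forall>k<N. bond N i A B k = s k"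
    using pcoef_lincomb_nonzero nz S(2) by blast
  have ne: "Suc i mod N \<noteq> i" and si: "Suc i mod N < N" using Suc_mod_neq[OF N] N by auto
  have "s i = bond N i A B i" "s (Suc i mod N) = bond N i A B (Suc i mod N)" using s(2) i si by auto
  then have "s i \<noteq> PI" "s (Suc i mod N) \<noteq> PI" using ne A B by (simp_all add: bond_def)
  then have "i = Suc i mod N"
    using support_le_1_single_site[of N s i "Suc i mod N"] S(1) s(1) i si N by simp
  then show False using ne by simp
qed

theorem mainTheorem4:
  fixes N :: nat and JX JY hX hY hZ :: real and Q :: op
  assumes "N \<ge> 6" and "JX \<noteq> 0" and "JY \<noteq> 0" and "(hX, hY) \<noteq> (0, 0)"
    and "local_op 2 N Q"
    and "commutes N Q (ham N JX JY hX hY hZ)"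
  shows "(even N \<and> hZ = 0 \<and> hX \<noteq> 0 \<and> hY \<noteq> 0 \<and> JY = - JX * (hY / hX) ^ 2 \<longrightarrow>
            (\<exists>\<alpha> \<beta> \<gamma> :: complex. Q = (\<lambda>a b. \<alpha> * idop N a b + \<beta> * ham N JX JY hX hY hZ a b
                                         + \<gamma> * Q0 N hX hY a b))
            \<and> commutes N (Q0 N hX hY) (ham N JX JY hX hY hZ))
       \<and> (\<not> (even N \<and> hZ = 0 \<and> hX \<noteq> 0 \<and> hY \<noteq> 0 \<and> JY = - JX * (hY / hX) ^ 2) \<longrightarrow>
            (\<exists>\<alpha> \<beta> :: complex. Q = (\<lambda>a b. \<alpha> * idop N a b + \<beta> * ham N JX JY hX hY hZ a b)))
       \<and> (local_op 1 N Q \<longrightarrow> (\<exists>\<alpha> :: complex. Q = (\<lambda>a b. \<alpha> * idop N a b)))"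
proof -
  obtain \<alpha> \<beta> \<gamma> where Q: "Q = (\<lambda>a b. \<alpha> * idop N a b + \<beta> * ham N JX JY hX hY hZ a b + \<gamma> * Q0 N hX hY a b)"
    and \<gamma>: "\<not> special_point N JX JY hX hY hZ \<Longrightarrow> \<gamma> = 0"
    and xx: "\<And>i. i < N \<Longrightarrow> pcoef N (bond N i PX PX) Q = \<beta> * of_real JX + \<gamma> * (-1) ^ (i + 1) * of_real hX ^ 2"
    and yy: "\<And>i. i < N \<Longrightarrow> pcoef N (bond N i PY PY) Q = \<beta> * of_real JY + \<gamma> * (-1) ^ (i + 1) * of_real hY ^ 2"
    using commutant_decomposition[OF assms] by blast
  have "\<beta> = 0 \<and> \<gamma> = 0" if "local_op 1 N Q"
  proof -
    have "pcoef N (bond N i P P) Q = 0" if "i < 2" "P \<noteq> PI" for i P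
      using local_op_1_bond_coef_zero[OF _ \<open>local_op 1 N Q\<close>] that assms(1) by simp
    then have "\<beta> * of_real JX - \<gamma> * of_real hX ^ 2 = 0" "\<beta> * of_real JX + \<gamma> * of_real hX ^ 2 = 0"
      "\<beta> * of_real JY - \<gamma> * of_real hY ^ 2 = 0" "\<beta> * of_real JY + \<gamma> * of_real hY ^ 2 = 0"
      using xx[of 0] xx[of 1] yy[of 0] yy[of 1] assms(1) by auto
    then have "\<beta> * of_real JX = 0" "\<gamma> * of_real hX ^ 2 = 0" "\<gamma> * of_real hY ^ 2 = 0"
      by algebra+
    then show ?thesis using assms(2,4) by auto
  qed
  then show ?thesis
    using Q \<gamma> Q0_commutes_ham[OF assms(1)] unfolding special_point_def by auto
qed

end
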